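(* Let $\Psi=\{\psi_i:[a_i,b_i]\to[c_i,d_i]\}_{i=1}^k$ be an orientation preserving system of partial isometries and $\mathbf y$ an admissible vector for $\Psi$. If the interval exchange transformation $T_{\Psi,\mathbf y}$ fills the double suspension surface $\widehat\Sigma_{\Psi,\mathbf y}$, then the full restriction space $\mathscr R(T_{\Psi,\mathbf y})$ is rich.
   Context: A system of partial isometries is a collection $\Psi=\{\psi_1,\dots,\psi_k\}$ of isometries $\psi_i:[a_i,b_i]\to[c_i,d_i]$ between subintervals of $[0,1]$ of equal length, with $0\in\{a_1,c_1,\dots,a_k,c_k\}$ and $1\in\{b_1,d_1,\dots,b_k,d_k\}$; it is orientation preserving if every $\psi_i$ is a translation $x\mapsto x+c_i-a_i$. An admissible vector is $\mathbf y=(y_1,\dots,y_{2k})$ of pairwise distinct points of $(0,1)$. Choose $\varepsilon>0$ so small that the intervals $[y_j,y_j+\varepsilon]$ are pairwise disjoint and lie in $[0,1)$, and let $D=[0,1]^2\setminus\bigcup_{i=1}^k\big((a_i,b_i)\times(y_i,y_i+\varepsilon)\cup(c_i,d_i)\times(y_{i+k},y_{i+k}+\varepsilon)\big)$. The double suspension surface $\widehat\Sigma_{\Psi,\mathbf y}$ is obtained from $D$ by identifying, via translations, $[0,1]\times\{0\}$ with $[0,1]\times\{1\}$, $[a_i,b_i]\times\{y_i\}$ with $[c_i,d_i]\times\{y_{i+k}+\varepsilon\}$, and $[a_i,b_i]\times\{y_i+\varepsilon\}$ with $[c_i,d_i]\times\{y_{i+k}\}$, and collapsing to a point each vertical segment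 of $\partial D$ ($\{0\}\times[0,1]$, $\{1\}\times[0,1]$, $\{a_i\}\times[y_i,y_i+\varepsilon]$, $\{b_i\}\times[y_i,y_i+\varepsilon]$, $\{c_i\}\times[y_{i+k},y_{i+k}+\varepsilon]$, $\{d_i\}\times[y_{i+k},y_{i+k}+\varepsilon]$). The form $dx$ descends to a closed $1$-form $\omega$ defining a measured oriented foliation $\widehat{\mathcal F}_{\Psi,\mathbf y}$; its first return map to the transversal $\gamma=[0,1]\times\{0\}$ (parametrized by $x$) is an interval exchange transformation $T_{\Psi,\mathbf y}=T_{\rho,\mathbf b}$ for some permutation $\rho\in S_m$ and $\mathbf b\in\Delta^{m-1}$. $T_{\Psi,\mathbf y}$ fills $\widehat\Sigma_{\Psi,\mathbf y}$ if every leaf of $\widehat{\mathcal F}_{\Psi,\mathbf y}$ meets $\gamma$. Here an interval exchange transformation is $T_{\rho,\mathbf b}(x)=x-x_i+\widetilde x_{\rho^{-1}(i)}$ on $[x_{i-1},x_i)$, $x_i=\sum_{j\le i}b_j$, $\widetilde x_i=\sum_{j\le i}b_{\rho(j)}$, $x_0=\widetilde x_0=0$. Its full restriction space $\mathscr R(T_{\rho,\mathbf b})\subset(\mathbb R^m)^*$ is the real span of the integral linear functionals $r$ with $r(\mathbf b)=0$; a subspace $\mathscr R\subset(\mathbb R^m)^*$ is rich if $\mathrm{Ann}(\mathscr R)=\{v\in\mathbb R^m:r(v)=0\ \forall r\in\mathscr R\}$ is isotropic for the skew form $\langle e_i,e_j\rangle_\rho=1$ if $i<j$ and $\rho^{-1}(i)>\rho^{-1}(j)$,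 $-1$ if $i>j$ and $\rho^{-1}(i)<\rho^{-1}(j)$, $0$ otherwise. *)

theory Defs
  imports Complex_Main "HOL-Combinatorics.Permutations"
begin

text \<open>The system consists of k translations psi_i : [a i, b i] -> [c i, d i],
  x |-> x + c i - a i, for i < k (0-based indexing: the paper's psi_(i+1)).\<close>

definition op_system :: "nat \<Rightarrow> (nat \<Rightarrow> real) \<Rightarrow> (nat \<Rightarrow> real) \<Rightarrow> (nat \<Rightarrow> real) \<Rightarrow> (nat \<Rightarrow> real) \<Rightarrow> bool" where
  "op_system k a b c d \<longleftrightarrow>
     (\<forall>i<k. 0 \<le> a i \<and> a i < b i \<and> b i \<le> 1 \<and> 0 \<le> c i \<and> c i < d i \<and> d i \<le> 1
            \<and> d i - c i = b i - a i)
   \<and> (\<exists>i<k. a i = 0 \<or> c i = 0) \<and> (\<exists>i<k. b i = 1 \<or> d i = 1)"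

text \<open>Admissible vector y_0,...,y_(2k-1) (0-based; y j for j<k belongs to [a j,b j],
  y (j+k) to [c j, d j]).\<close>

definition admissible :: "nat \<Rightarrow> (nat \<Rightarrow> real) \<Rightarrow> bool" where
  "admissible k y \<longleftrightarrow> (\<forall>j<2*k. 0 < y j \<and> y j < 1) \<and> inj_on y {..<2*k}"

definition eps_ok :: "nat \<Rightarrow> (nat \<Rightarrow> real) \<Rightarrow> real \<Rightarrow> bool" where
  "eps_ok k y \<epsilon> \<longleftrightarrow> 0 < \<epsilon> \<and> (\<forall>j<2*k. y j + \<epsilon> < 1)
     \<and> (\<forall>j<2*k. \<forall>j'<2*k. j \<noteq> j' \<longrightarrow> y j + \<epsilon> < y j' \<or> y j' + \<epsilon> < y j)"

text \<open>Removed rectangle number j (j < 2k) is (Lft j, Rgt j) x (y j, y j + eps);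
  its bottom edge is glued to the top edge of the partner rectangle, with
  horizontal translation by Lft (partner j) - Lft j.\<close>

definition Lft :: "nat \<Rightarrow> (nat \<Rightarrow> real) \<Rightarrow> (nat \<Rightarrow> real) \<Rightarrow> nat \<Rightarrow> real" where
  "Lft k a c j = (if j < k then a j else c (j - k))"

definition Rgt :: "nat \<Rightarrow> (nat \<Rightarrow> real) \<Rightarrow> (nat \<Rightarrow> real) \<Rightarrow> nat \<Rightarrow> real" where
  "Rgt k b d j = (if j < k then b j else d (j - k))"

definition partner :: "nat \<Rightarrow> nat \<Rightarrow> nat" where
  "partner k j = (if j < k then j + k else j - k)"

text \<open>A start (x,s) is the lower endpoint of a maximal upward vertical segment of
  the foliation: either on gamma (s = 0) or on the top edge of a rectangle
  (possibly at a corner, i.e. a singular point, then the segment is a separatrix).\<close>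

definition is_start :: "nat \<Rightarrow> (nat \<Rightarrow> real) \<Rightarrow> (nat \<Rightarrow> real) \<Rightarrow> (nat \<Rightarrow> real) \<Rightarrow> (nat \<Rightarrow> real)
     \<Rightarrow> (nat \<Rightarrow> real) \<Rightarrow> real \<Rightarrow> real \<times> real \<Rightarrow> bool" where
  "is_start k a b c d y \<epsilon> p \<longleftrightarrow> 0 < fst p \<and> fst p < 1 \<and>
     (snd p = 0 \<or> (\<exists>j<2*k. snd p = y j + \<epsilon> \<and> Lft k a c j \<le> fst p \<and> fst p \<le> Rgt k b d j))"

definition obst :: "nat \<Rightarrow> (nat \<Rightarrow> real) \<Rightarrow> (nat \<Rightarrow> real) \<Rightarrow> (nat \<Rightarrow> real) \<Rightarrow> (nat \<Rightarrow> real)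
     \<Rightarrow> (nat \<Rightarrow> real) \<Rightarrow> real \<Rightarrow> real \<Rightarrow> nat \<Rightarrow> bool" where
  "obst k a b c d y x s j \<longleftrightarrow> j < 2*k \<and> Lft k a c j \<le> x \<and> x \<le> Rgt k b d j \<and> s < y j"

text \<open>The segment starting at p hits the bottom edge of a rectangle in its interior
  and continues on the glued top edge of the partner rectangle (hitting it at an
  endpoint means reaching a singularity: no step).\<close>

definition pass_step :: "nat \<Rightarrow> (nat \<Rightarrow> real) \<Rightarrow> (nat \<Rightarrow> real) \<Rightarrow> (nat \<Rightarrow> real) \<Rightarrow> (nat \<Rightarrow> real)
     \<Rightarrow> (nat \<Rightarrow> real) \<Rightarrow> real \<Rightarrow> real \<times> real \<Rightarrow> real \<times> real \<Rightarrow> bool" where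
  "pass_step k a b c d y \<epsilon> p q \<longleftrightarrow> is_start k a b c d y \<epsilon> p \<and>
     (\<exists>j. obst k a b c d y (fst p) (snd p) j
        \<and> (\<forall>j'. obst k a b c d y (fst p) (snd p) j' \<longrightarrow> y j \<le> y j')
        \<and> Lft k a c j < fst p \<and> fst p < Rgt k b d j
        \<and> q = (fst p + (Lft k a c (partner k j) - Lft k a c j), y (partner k j) + \<epsilon>))"

text \<open>The segment starting at p reaches height 1, i.e. gamma.\<close>

definition top_hit :: "nat \<Rightarrow> (nat \<Rightarrow> real) \<Rightarrow> (nat \<Rightarrow> real) \<Rightarrow> (nat \<Rightarrow> real) \<Rightarrow> (nat \<Rightarrow> real)
     \<Rightarrow> (nat \<Rightarrow> real) \<Rightarrow> real \<Rightarrow> real \<times> real \<Rightarrow> bool" where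
  "top_hit k a b c d y \<epsilon> p \<longleftrightarrow> is_start k a b c d y \<epsilon> p \<and> (\<forall>j. \<not> obst k a b c d y (fst p) (snd p) j)"

definition leaf_step :: "nat \<Rightarrow> (nat \<Rightarrow> real) \<Rightarrow> (nat \<Rightarrow> real) \<Rightarrow> (nat \<Rightarrow> real) \<Rightarrow> (nat \<Rightarrow> real)
     \<Rightarrow> (nat \<Rightarrow> real) \<Rightarrow> real \<Rightarrow> real \<times> real \<Rightarrow> real \<times> real \<Rightarrow> bool" where
  "leaf_step k a b c d y \<epsilon> p q \<longleftrightarrow> pass_step k a b c d y \<epsilon> p q
     \<or> (top_hit k a b c d y \<epsilon> p \<and> q = (fst p, 0))"

text \<open>First return map T_(Psi,y) to gamma, as a (functional) relation: x returns to x'.\<close>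

definition first_return :: "nat \<Rightarrow> (nat \<Rightarrow> real) \<Rightarrow> (nat \<Rightarrow> real) \<Rightarrow> (nat \<Rightarrow> real) \<Rightarrow> (nat \<Rightarrow> real)
     \<Rightarrow> (nat \<Rightarrow> real) \<Rightarrow> real \<Rightarrow> real \<Rightarrow> real \<Rightarrow> bool" where
  "first_return k a b c d y \<epsilon> x x' \<longleftrightarrow> 0 < x \<and> x < 1 \<and>
     (\<exists>s. (pass_step k a b c d y \<epsilon>)\<^sup>*\<^sup>* (x, 0) (x', s) \<and> top_hit k a b c d y \<epsilon> (x', s))"

text \<open>T_(Psi,y) fills the surface: every leaf (a connected chain of segments,
  singular points removed) contains a point of gamma.\<close>

definition fills :: "nat \<Rightarrow> (nat \<Rightarrow> real) \<Rightarrow> (nat \<Rightarrow> real) \<Rightarrow> (nat \<Rightarrow> real) \<Rightarrow> (nat \<Rightarrow> real)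
     \<Rightarrow> (nat \<Rightarrow> real) \<Rightarrow> real \<Rightarrow> bool" where
  "fills k a b c d y \<epsilon> \<longleftrightarrow> (\<forall>p. is_start k a b c d y \<epsilon> p \<longrightarrow>
     (\<exists>x'. (\<lambda>u v. leaf_step k a b c d y \<epsilon> u v \<or> leaf_step k a b c d y \<epsilon> v u)\<^sup>*\<^sup>* p (x', 0)))"

section \<open>Interval exchange transformations (indices 1..m)\<close>

definition xpt :: "(nat \<Rightarrow> real) \<Rightarrow> nat \<Rightarrow> real" where
  "xpt lam i = (\<Sum>j\<in>{1..i}. lam j)"

definition xtl :: "(nat \<Rightarrow> nat) \<Rightarrow> (nat \<Rightarrow> real) \<Rightarrow> nat \<Rightarrow> real" where
  "xtl \<rho> lam i = (\<Sum>j\<in>{1..i}. lam (\<rho> j))"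

definition iet_map :: "nat \<Rightarrow> (nat \<Rightarrow> nat) \<Rightarrow> (nat \<Rightarrow> real) \<Rightarrow> real \<Rightarrow> real" where
  "iet_map m \<rho> lam x =
     (let i = (THE i. i \<in> {1..m} \<and> xpt lam (i - 1) \<le> x \<and> x < xpt lam i)
      in x - xpt lam i + xtl \<rho> lam (inv_into {1..m} \<rho> i))"

definition iet_data :: "nat \<Rightarrow> (nat \<Rightarrow> nat) \<Rightarrow> (nat \<Rightarrow> real) \<Rightarrow> bool" where
  "iet_data m \<rho> lam \<longleftrightarrow> \<rho> permutes {1..m} \<and> (\<forall>i\<in>{1..m}. 0 < lam i) \<and> (\<Sum>i\<in>{1..m}. lam i) = 1"

text \<open>Linear functionals on R^m are coefficient vectors supported on {1..m}.\<close>

definition pair :: "nat \<Rightarrow> (nat \<Rightarrow> real) \<Rightarrow> (nat \<Rightarrow> real) \<Rightarrow> real" where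
  "pair m r v = (\<Sum>i\<in>{1..m}. r i * v i)"

definition supp_in :: "nat \<Rightarrow> (nat \<Rightarrow> real) \<Rightarrow> bool" where
  "supp_in m v \<longleftrightarrow> (\<forall>i. i \<notin> {1..m} \<longrightarrow> v i = 0)"

definition integral_restrictions :: "nat \<Rightarrow> (nat \<Rightarrow> real) \<Rightarrow> (nat \<Rightarrow> real) set" where
  "integral_restrictions m lam =
     {r. supp_in m r \<and> (\<forall>i\<in>{1..m}. r i \<in> \<int>) \<and> pair m r lam = 0}"

definition restriction_space :: "nat \<Rightarrow> (nat \<Rightarrow> real) \<Rightarrow> (nat \<Rightarrow> real) set" where
  "restriction_space m lam =
     {r. \<exists>F coef. finite F \<and> F \<subseteq> integral_restrictions m lam \<and> r = (\<lambda>i. \<Sum>f\<in>F. coef f * f i)}"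

definition Ann :: "nat \<Rightarrow> (nat \<Rightarrow> real) set \<Rightarrow> (nat \<Rightarrow> real) set" where
  "Ann m R = {v. supp_in m v \<and> (\<forall>r\<in>R. pair m r v = 0)}"

definition skew_coeff :: "nat \<Rightarrow> (nat \<Rightarrow> nat) \<Rightarrow> nat \<Rightarrow> nat \<Rightarrow> real" where
  "skew_coeff m \<rho> i j =
     (if i < j \<and> inv_into {1..m} \<rho> i > inv_into {1..m} \<rho> j then 1
      else if i > j \<and> inv_into {1..m} \<rho> i < inv_into {1..m} \<rho> j then -1
      else 0)"

definition skew :: "nat \<Rightarrow> (nat \<Rightarrow> nat) \<Rightarrow> (nat \<Rightarrow> real) \<Rightarrow> (nat \<Rightarrow> real) \<Rightarrow> real" where
  "skew m \<rho> v w = (\<Sum>i\<in>{1..m}. \<Sum>j\<in>{1..m}. v i * w j * skew_coeff m \<rho> i j)"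

definition rich :: "nat \<Rightarrow> (nat \<Rightarrow> nat) \<Rightarrow> (nat \<Rightarrow> real) set \<Rightarrow> bool" where
  "rich m \<rho> R \<longleftrightarrow> (\<forall>v\<in>Ann m R. \<forall>w\<in>Ann m R. skew m \<rho> v w = 0)"

end

theory Submission
  imports Defs "HOL-Analysis.Continuum_Not_Denumerable"
begin

(* A vector annihilating the restriction space satisfies every rational linear relation
   among the lengths lam i, so it extends to an additive function on the reals taking these
   values. Richness therefore reduces to the identity  sum_i f (lam i) * g (t i) = 0  for all
   additive f and g, where t i = sum_j skew_coeff i j * lam j is the translation of T on its i-th
   interval.

   Cutting [0,1) at finitely many points gives pieces on which the return orbit passes the
   same rectangles; the translation of a piece is the sum of the horizontal shifts of these
   rectangles. Regrouping by rectangles, the sum becomes  sum_j g (shift j) * sum f (|P|),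
   the inner sum running over the passages of pieces P through rectangle j. Since T fills
   the surface, the translated passages tile the bottom side of rectangle j up to a countable
   set, so the inner sum is f (width j). Partner rectangles have equal widths and opposite
   shifts, hence everything cancels. *)

section \<open>Additive extensions of annihilating vectors\<close>

definition rat_scale :: "rat \<Rightarrow> real \<Rightarrow> real" where
  "rat_scale q x = of_rat q * x"

interpretation rat: vector_space rat_scale
  by unfold_locales (auto simp: rat_scale_def algebra_simps of_rat_add of_rat_mult)

interpretation rat_pair: vector_space_pair rat_scale rat_scale ..

lemma exists_common_denominator:
  assumes "finite S"
  shows "\<exists>D::int. D > 0 \<and> (\<forall>j\<in>S. of_rat (c j) * of_int D \<in> (\<int>::real set))"
  using assms
proof (induction S)
  case empty
  show ?case by (intro exI[of _ 1]) auto
next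
  case (insert x S)
  then obtain D where D: "D > 0" "\<forall>j\<in>S. of_rat (c j) * of_int D \<in> (\<int>::real set)"
    by auto
  obtain n e where ne: "quotient_of (c x) = (n, e)" by force
  have e: "e > 0" using quotient_of_denom_pos[OF ne] .
  have "of_rat (c x) * of_int (D * e) = (of_int (n * D) :: real)"
    using e by (simp add: quotient_of_div[OF ne] of_rat_divide field_simps)
  moreover have "of_rat (c j) * of_int (D * e) \<in> (\<int>::real set)" if "j \<in> S" for j
    using D(2) that by (metis Ints_mult Ints_of_int mult.assoc of_int_mult)
  ultimately show ?case
    using D e by (intro exI[of _ "D * e"]) (auto simp del: of_int_mult)
qed

lemma rat_relation_in_restriction_space:
  assumes "(\<Sum>j\<in>{1..m}. of_rat (c j) * lam j) = 0"
  shows "(\<lambda>j. if j \<in> {1..m} then of_rat (c j) else 0) \<in> restriction_space m lam"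
proof -
  obtain D :: int where D: "D > 0" "\<forall>j\<in>{1..m}. of_rat (c j) * of_int D \<in> (\<int>::real set)"
    using exists_common_denominator[of "{1..m}" c] by auto
  define r :: "nat \<Rightarrow> real" where "r = (\<lambda>j. if j \<in> {1..m} then of_rat (c j) * of_int D else 0)"
  have "pair m r lam = of_int D * (\<Sum>j\<in>{1..m}. of_rat (c j) * lam j)"
    unfolding pair_def r_def by (simp add: sum_distrib_left mult_ac)
  then have "r \<in> integral_restrictions m lam"
    using D assms unfolding integral_restrictions_def supp_in_def r_def by auto
  moreover have "(\<lambda>j. if j \<in> {1..m} then of_rat (c j) else 0) = (\<lambda>i. \<Sum>f\<in>{r}. 1 / of_int D * f i)"
    using D unfolding r_def by (auto simp: fun_eq_iff)
  ultimately show ?thesis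
    unfolding restriction_space_def by (intro CollectI exI[of _ "{r}"] exI[of _ "\<lambda>_. 1 / of_int D"]) auto
qed

lemma Ann_restriction_space_rat_relation:
  assumes "v \<in> Ann m (restriction_space m lam)" "(\<Sum>j\<in>{1..m}. of_rat (c j) * lam j) = 0"
  shows "(\<Sum>j\<in>{1..m}. of_rat (c j) * v j) = 0"
proof -
  have "pair m (\<lambda>j. if j \<in> {1..m} then of_rat (c j) else 0) v = 0"
    using assms rat_relation_in_restriction_space unfolding Ann_def by blast
  then show ?thesis
    unfolding pair_def by simp
qed

lemma Ann_restriction_space_rat_combination:
  assumes v: "v \<in> Ann m (restriction_space m lam)" and "I \<subseteq> {1..m}" "i \<in> {1..m}"
    and lam_i: "lam i = (\<Sum>j\<in>I. of_rat (u j) * lam j)"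
  shows "v i = (\<Sum>j\<in>I. of_rat (u j) * v j)"
proof -
  define c where "c j = (if j = i then 1 else 0) - (if j \<in> I then u j else 0)" for j
  have c_sum: "(\<Sum>j\<in>{1..m}. of_rat (c j) * w j) = w i - (\<Sum>j\<in>I. of_rat (u j) * w j)" for w
  proof -
    have "(\<Sum>j\<in>{1..m}. of_rat (c j) * w j)
        = (\<Sum>j\<in>{1..m}. if j = i then w j else 0) - (\<Sum>j\<in>{1..m}. if j \<in> I then of_rat (u j) * w j else 0)"
      unfolding sum_subtractf[symmetric] c_def by (intro sum.cong) (auto simp: of_rat_diff algebra_simps)
    also have "\<dots> = w i - (\<Sum>j\<in>I. of_rat (u j) * w j)"
      using assms(2,3) by (simp add: sum.If_cases Int_absorb1)
    finally show ?thesis .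
  qed
  have "(\<Sum>j\<in>{1..m}. of_rat (c j) * lam j) = 0"
    using c_sum[of lam] lam_i by simp
  from Ann_restriction_space_rat_relation[OF v this] show ?thesis
    using c_sum[of v] by simp
qed

lemma Ann_restriction_space_additive_extension:
  assumes v: "v \<in> Ann m (restriction_space m lam)"
  obtains g where "additive g" "\<And>i. i \<in> {1..m} \<Longrightarrow> g (lam i) = v i"
proof -
  obtain B where B: "B \<subseteq> lam ` {1..m}" "rat.independent B" "lam ` {1..m} \<subseteq> rat.span B"
    using rat.maximal_independent_subset[of "lam ` {1..m}"] by blast
  obtain I where I: "I \<subseteq> {1..m}" "inj_on lam I" "B = lam ` I"
    using B(1) by (auto simp: subset_image_inj)
  obtain g where g: "Vector_Spaces.linear rat_scale rat_scale g" "\<And>j. j \<in> I \<Longrightarrow> g (lam j) = v j"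
    using rat_pair.linear_independent_extend[OF B(2), of "\<lambda>b. v (inv_into I lam b)"]
      I(2,3) by auto
  interpret g: module_hom rat_scale rat_scale g
    using g(1) by (rule module_hom_linearI)
  have g_lam: "g (lam i) = v i" if i: "i \<in> {1..m}" for i
  proof -
    have "lam i \<in> rat.span (lam ` I)"
      using B(3) I(3) i by auto
    then obtain u where u: "lam i = (\<Sum>j\<in>I. rat_scale (u (lam j)) (lam j))"
      using rat.span_finite[of "lam ` I"] finite_subset[OF I(1)] by (auto simp: sum.reindex[OF I(2)])
    then have "v i = (\<Sum>j\<in>I. of_rat (u (lam j)) * v j)"
      using Ann_restriction_space_rat_combination[OF v I(1) i] by (simp add: rat_scale_def)
    then show ?thesis
      unfolding u g.sum g.scale using g(2) by (simp add: rat_scale_def)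
  qed
  have "additive g"
    by unfold_locales (rule g.add)
  from this g_lam show ?thesis
    by (rule that)
qed

lemma additive_skew_coeff_mult:
  assumes "additive g"
  shows "g (skew_coeff m \<rho> i j * x) = skew_coeff m \<rho> i j * g x"
  using additive.minus[OF assms] additive.zero[OF assms] unfolding skew_coeff_def by simp

lemma rich_restriction_spaceI:
  assumes "\<And>f g :: real \<Rightarrow> real. additive f \<Longrightarrow> additive g \<Longrightarrow>
     (\<Sum>i\<in>{1..m}. f (lam i) * g (\<Sum>j\<in>{1..m}. skew_coeff m \<rho> i j * lam j)) = 0"
  shows "rich m \<rho> (restriction_space m lam)"
  unfolding rich_def
proof (intro ballI)
  fix v w
  assume "v \<in> Ann m (restriction_space m lam)" "w \<in> Ann m (restriction_space m lam)"
  then obtain f g where f: "additive f" "\<And>i. i \<in> {1..m} \<Longrightarrow> f (lam i) = v i"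
    and g: "additive g" "\<And>i. i \<in> {1..m} \<Longrightarrow> g (lam i) = w i"
    by (metis Ann_restriction_space_additive_extension)
  have "(\<Sum>j\<in>{1..m}. v i * w j * skew_coeff m \<rho> i j)
      = f (lam i) * g (\<Sum>j\<in>{1..m}. skew_coeff m \<rho> i j * lam j)" if "i \<in> {1..m}" for i
  proof -
    have "g (\<Sum>j\<in>{1..m}. skew_coeff m \<rho> i j * lam j) = (\<Sum>j\<in>{1..m}. skew_coeff m \<rho> i j * w j)"
      using g by (simp add: additive.sum[OF g(1)] additive_skew_coeff_mult[OF g(1)])
    then show ?thesis
      using f(2) that by (simp add: sum_distrib_left mult_ac)
  qed
  then have "skew m \<rho> v w = (\<Sum>i\<in>{1..m}. f (lam i) * g (\<Sum>j\<in>{1..m}. skew_coeff m \<rho> i j * lam j))"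
    unfolding skew_def by (rule sum.cong[OF refl])
  also have "\<dots> = 0"
    by (rule assms[OF f(1) g(1)])
  finally show "skew m \<rho> v w = 0" .
qed

section \<open>Tilings of an interval\<close>

lemma interval_tiling_first_tile:
  fixes u v :: "'q \<Rightarrow> real"
  assumes "finite Q" "Q \<noteq> {}"
    and inside: "\<And>q. q \<in> Q \<Longrightarrow> l \<le> u q \<and> u q < v q \<and> v q \<le> r"
    and disjoint: "\<And>q q'. q \<in> Q \<Longrightarrow> q' \<in> Q \<Longrightarrow> q \<noteq> q' \<Longrightarrow> {u q<..<v q} \<inter> {u q'<..<v q'} = {}"
    and almost_cover: "countable ({l<..<r} - (\<Union>q\<in>Q. {u q<..<v q}))"
  obtains q0 where "q0 \<in> Q" "u q0 = l" "\<And>q. q \<in> Q - {q0} \<Longrightarrow> v q0 \<le> u q"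
proof -
  have "Min (u ` Q) \<in> u ` Q"
    using assms(1,2) by simp
  then obtain q0 where q0: "q0 \<in> Q" "u q0 = Min (u ` Q)"
    by (metis imageE)
  have min: "u q0 \<le> u q" if "q \<in> Q" for q
    using q0 that assms(1) by simp
  have "{l<..<u q0} \<subseteq> {l<..<r} - (\<Union>q\<in>Q. {u q<..<v q})"
    using min inside q0(1) by fastforce
  then have "\<not> l < u q0"
    using almost_cover countable_subset uncountable_open_interval by blast
  then have "u q0 = l"
    using inside[OF q0(1)] by simp
  moreover have "v q0 \<le> u q" if q: "q \<in> Q - {q0}" for q
  proof (rule ccontr)
    assume "\<not> v q0 \<le> u q"
    then have "(u q + min (v q) (v q0)) / 2 \<in> {u q<..<v q} \<inter> {u q0<..<v q0}"
      using min[of q] inside[of q] q by auto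
    then show False
      using disjoint[of q q0] q q0(1) by auto
  qed
  ultimately show ?thesis
    using q0(1) that by blast
qed

lemma additive_sum_interval_tiling:
  fixes u v :: "'q \<Rightarrow> real"
  assumes "finite Q" "additive f" "l \<le> r"
    and inside: "\<And>q. q \<in> Q \<Longrightarrow> l \<le> u q \<and> u q < v q \<and> v q \<le> r"
    and disjoint: "\<And>q q'. q \<in> Q \<Longrightarrow> q' \<in> Q \<Longrightarrow> q \<noteq> q' \<Longrightarrow> {u q<..<v q} \<inter> {u q'<..<v q'} = {}"
    and almost_cover: "countable ({l<..<r} - (\<Union>q\<in>Q. {u q<..<v q}))"
  shows "(\<Sum>q\<in>Q. f (v q - u q)) = f (r - l)"
  using assms(1,3-)
proof (induction "card Q" arbitrary: Q l)
  case 0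
  then have "countable {l<..<r}"
    by simp
  then have "l = r"
    using uncountable_open_interval \<open>l \<le> r\<close> by fastforce
  with "0" show ?case
    using additive.zero[OF \<open>additive f\<close>] by simp
next
  case (Suc n)
  then have "Q \<noteq> {}"
    by auto
  then obtain q0 where q0: "q0 \<in> Q" "u q0 = l" "\<And>q. q \<in> Q - {q0} \<Longrightarrow> v q0 \<le> u q"
    using interval_tiling_first_tile[OF Suc.prems(1) _ Suc.prems(3,4,5)] by blast
  have "(\<Sum>q\<in>Q - {q0}. f (v q - u q)) = f (r - v q0)"
  proof (rule Suc.hyps(1))
    show "n = card (Q - {q0})"
      using Suc.hyps(2) Suc.prems(1) q0(1) by simp
    have "{v q0<..<r} - (\<Union>q\<in>Q - {q0}. {u q<..<v q}) \<subseteq> {l<..<r} - (\<Union>q\<in>Q. {u q<..<v q})"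
      using q0(2) Suc.prems(3)[OF q0(1)] by auto
    then show "countable ({v q0<..<r} - (\<Union>q\<in>Q - {q0}. {u q<..<v q}))"
      using Suc.prems(5) countable_subset by blast
  qed (use Suc.prems q0 in auto)
  then have "(\<Sum>q\<in>Q. f (v q - u q)) = f (v q0 - l) + f (r - v q0)"
    using Suc.prems(1) q0(1,2) by (simp add: sum.remove)
  also have "\<dots> = f (r - l)"
    using additive.add[OF \<open>additive f\<close>, of "v q0 - l" "r - v q0"] by simp
  finally show ?case .
qed

definition gaps :: "real set \<Rightarrow> (real \<times> real) set" where
  "gaps D = {(u, v). u \<in> D \<and> v \<in> D \<and> u < v \<and> {u<..<v} \<inter> D = {}}"

lemma finite_gaps: "finite D \<Longrightarrow> finite (gaps D)"
  by (rule finite_subset[of _ "D \<times> D"]) (auto simp: gaps_def)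

lemma gapsD:
  assumes "P \<in> gaps D"
  shows "fst P \<in> D" "snd P \<in> D" "fst P < snd P" "{fst P<..<snd P} \<inter> D = {}"
  using assms unfolding gaps_def by auto

lemma gap_not_straddling:
  assumes "P \<in> gaps D" "d \<in> D"
  shows "d \<le> fst P \<or> snd P \<le> d"
proof -
  have "d \<notin> {fst P<..<snd P}"
    using gapsD(4)[OF assms(1)] assms(2) by blast
  then show ?thesis
    by auto
qed

lemma gaps_disjoint:
  assumes "P \<in> gaps D" "P' \<in> gaps D" "z \<in> {fst P<..<snd P}" "z \<in> {fst P'<..<snd P'}"
  shows "P = P'"
proof -
  have "fst P \<le> fst P'" "fst P' \<le> fst P" "snd P \<le> snd P'" "snd P' \<le> snd P"
    using gap_not_straddling[OF assms(1) gapsD(1)[OF assms(2)]]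
      gap_not_straddling[OF assms(2) gapsD(1)[OF assms(1)]]
      gap_not_straddling[OF assms(1) gapsD(2)[OF assms(2)]]
      gap_not_straddling[OF assms(2) gapsD(2)[OF assms(1)]] assms(3,4)
    by auto
  then show ?thesis
    by (simp add: prod_eq_iff)
qed

lemma gaps_cover:
  assumes "finite D" "z \<notin> D" "l \<in> D" "l < z" "r \<in> D" "z < r"
  obtains P where "P \<in> gaps D" "z \<in> {fst P<..<snd P}"
proof -
  define u where "u = Max {d\<in>D. d < z}"
  define v where "v = Min {d\<in>D. z < d}"
  have "u \<in> {d\<in>D. d < z}"
    unfolding u_def using assms by (intro Max_in) auto
  then have u: "u \<in> D" "u < z" "\<And>d. d \<in> D \<Longrightarrow> d < z \<Longrightarrow> d \<le> u"
    using assms(1) unfolding u_def by auto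
  have "v \<in> {d\<in>D. z < d}"
    unfolding v_def using assms by (intro Min_in) auto
  then have v: "v \<in> D" "z < v" "\<And>d. d \<in> D \<Longrightarrow> z < d \<Longrightarrow> v \<le> d"
    using assms(1) unfolding v_def by auto
  have "{u<..<v} \<inter> D = {}"
    using u(3) v(3) assms(2) by (fastforce simp: not_less_iff_gr_or_eq)
  then have "(u, v) \<in> gaps D"
    using u v unfolding gaps_def by auto
  then show ?thesis
    using that u(2) v(2) by fastforce
qed

lemma additive_sum_gaps:
  assumes "finite D" "additive f" "l \<in> D" "r \<in> D" "l \<le> r"
  shows "(\<Sum>P\<in>{P\<in>gaps D. l \<le> fst P \<and> snd P \<le> r}. f (snd P - fst P)) = f (r - l)"
proof (rule additive_sum_interval_tiling)
  show "finite {P\<in>gaps D. l \<le> fst P \<and> snd P \<le> r}"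
    using finite_gaps[OF assms(1)] by simp
  have "{l<..<r} - (\<Union>P\<in>{P\<in>gaps D. l \<le> fst P \<and> snd P \<le> r}. {fst P<..<snd P}) \<subseteq> D"
  proof
    fix z
    assume z: "z \<in> {l<..<r} - (\<Union>P\<in>{P\<in>gaps D. l \<le> fst P \<and> snd P \<le> r}. {fst P<..<snd P})"
    show "z \<in> D"
    proof (rule ccontr)
      assume "z \<notin> D"
      then obtain P where P: "P \<in> gaps D" "z \<in> {fst P<..<snd P}"
        using gaps_cover[OF assms(1) _ assms(3) _ assms(4)] z by auto
      then show False
        using z gap_not_straddling[OF P(1) assms(3)] gap_not_straddling[OF P(1) assms(4)] by auto
    qed
  qed
  then show "countable ({l<..<r} - (\<Union>P\<in>{P\<in>gaps D. l \<le> fst P \<and> snd P \<le> r}. {fst P<..<snd P}))"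
    using assms(1) countable_finite countable_subset by blast
next
  show "{fst P<..<snd P} \<inter> {fst P'<..<snd P'} = {}"
    if "P \<in> {P\<in>gaps D. l \<le> fst P \<and> snd P \<le> r}" "P' \<in> {P\<in>gaps D. l \<le> fst P \<and> snd P \<le> r}"
      "P \<noteq> P'" for P P'
    using gaps_disjoint that by blast
qed (use assms gapsD in auto)

section \<open>Interval exchange transformations\<close>

lemma xpt_0 [simp]: "xpt lam 0 = 0"
  unfolding xpt_def by simp

lemma xpt_Suc: "xpt lam (Suc i) = xpt lam i + lam (Suc i)"
  unfolding xpt_def by (simp add: sum.cl_ivl_Suc)

lemma xpt_diff: "1 \<le> i \<Longrightarrow> xpt lam i - xpt lam (i - 1) = lam i"
  using xpt_Suc[of lam "i - 1"] by simp

lemma xpt_less: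
  assumes pos: "\<forall>i\<in>{1..m}. 0 < lam i" and "i < i'" "i' \<le> m"
  shows "xpt lam i < xpt lam i'"
  using assms(2,3)
proof (induction i')
  case (Suc i')
  then have "0 < lam (Suc i')"
    using pos by auto
  with Suc show ?case
    by (cases "i = i'") (auto simp: xpt_Suc)
qed simp

lemma xpt_le:
  assumes "\<forall>i\<in>{1..m}. 0 < lam i" "i \<le> i'" "i' \<le> m"
  shows "xpt lam i \<le> xpt lam i'"
  using xpt_less[OF assms(1), of i i'] assms(2,3) by (cases "i = i'") auto

lemma iet_interval_unique:
  assumes pos: "\<forall>i\<in>{1..m}. 0 < lam i"
    and "i \<in> {1..m}" "x \<in> {xpt lam (i - 1)..<xpt lam i}"
    and "i' \<in> {1..m}" "x \<in> {xpt lam (i' - 1)..<xpt lam i'}"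
  shows "i = i'"
proof -
  have "\<not> i < i'"
    if "x \<in> {xpt lam (i - 1)..<xpt lam i}" "i' \<in> {1..m}" "x \<in> {xpt lam (i' - 1)..<xpt lam i'}"
    for i i'
  proof
    assume "i < i'"
    then have "xpt lam i \<le> xpt lam (i' - 1)"
      using that(2) by (intro xpt_le[OF pos]) auto
    then show False
      using that(1,3) by simp
  qed
  from this[OF assms(3-5)] this[OF assms(5) assms(2,3)] show ?thesis
    by linarith
qed

lemma iet_interval_exists:
  assumes pos: "\<forall>i\<in>{1..m}. 0 < lam i" and total: "xpt lam m = 1" and "0 \<le> x" "x < 1"
  obtains i where "i \<in> {1..m}" "x \<in> {xpt lam (i - 1)..<xpt lam i}"
proof -
  define i where "i = (LEAST i. x < xpt lam i)"
  have ex: "x < xpt lam m"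
    using total assms(4) by simp
  have "x < xpt lam i"
    unfolding i_def by (rule LeastI[of "\<lambda>i. x < xpt lam i", OF ex])
  moreover have "i \<le> m"
    unfolding i_def by (rule Least_le[of "\<lambda>i. x < xpt lam i", OF ex])
  moreover have "1 \<le> i"
    using \<open>x < xpt lam i\<close> assms(3) by (cases i) auto
  moreover have "\<not> x < xpt lam (i - 1)"
    using \<open>1 \<le> i\<close> unfolding i_def by (intro not_less_Least) simp
  ultimately show ?thesis
    using that by simp
qed

lemma iet_data_pos: "iet_data m \<rho> lam \<Longrightarrow> \<forall>i\<in>{1..m}. 0 < lam i"
  unfolding iet_data_def by blast

lemma iet_data_total: "iet_data m \<rho> lam \<Longrightarrow> xpt lam m = 1"
  unfolding iet_data_def xpt_def by blast

lemma xtl_eq_xpt: "xtl \<rho> lam = xpt (\<lambda>j. lam (\<rho> j))"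
  unfolding xtl_def xpt_def by (simp add: fun_eq_iff)

lemma iet_data_permuted:
  assumes "iet_data m \<rho> lam"
  shows "\<forall>i\<in>{1..m}. 0 < lam (\<rho> i)" "xtl \<rho> lam m = 1"
proof -
  have \<rho>: "\<rho> permutes {1..m}"
    using assms unfolding iet_data_def by blast
  show "\<forall>i\<in>{1..m}. 0 < lam (\<rho> i)"
    using assms permutes_in_image[OF \<rho>] unfolding iet_data_def by blast
  have "xtl \<rho> lam m = sum lam (\<rho> ` {1..m})"
    unfolding xtl_def by (simp add: sum.reindex[OF permutes_inj_on[OF \<rho>]])
  then show "xtl \<rho> lam m = 1"
    using assms permutes_image[OF \<rho>] unfolding iet_data_def by simp
qed

lemma iet_map_on_interval:
  assumes "\<forall>i\<in>{1..m}. 0 < lam i" "i \<in> {1..m}" "x \<in> {xpt lam (i - 1)..<xpt lam i}"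
  shows "iet_map m \<rho> lam x = x - xpt lam i + xtl \<rho> lam (inv_into {1..m} \<rho> i)"
proof -
  have "(THE i. i \<in> {1..m} \<and> xpt lam (i - 1) \<le> x \<and> x < xpt lam i) = i"
    using assms iet_interval_unique[OF assms(1)] by (intro the_equality) auto
  then show ?thesis
    unfolding iet_map_def Let_def by simp
qed

lemma xpt_eq_sum_if:
  assumes "i \<le> m"
  shows "xpt lam i = (\<Sum>j\<in>{1..m}. if j \<le> i then lam j else 0)"
proof -
  have "{1..m} \<inter> {j. j \<le> i} = {1..i}"
    using assms by auto
  then show ?thesis
    unfolding xpt_def by (simp add: sum.If_cases)
qed

lemma xtl_inv_into_eq_sum_if:
  assumes \<rho>: "\<rho> permutes {1..m}" and i: "i \<in> {1..m}"
  shows "xtl \<rho> lam (inv_into {1..m} \<rho> i)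
    = (\<Sum>j\<in>{1..m}. if inv_into {1..m} \<rho> j \<le> inv_into {1..m} \<rho> i then lam j else 0)"
proof -
  let ?iv = "inv_into {1..m} \<rho>"
  have bij: "bij_betw \<rho> {1..m} {1..m}"
    using \<rho> by (rule permutes_imp_bij)
  have "?iv i \<le> m"
    using bij_betw_inv_into[OF bij] i by (auto dest: bij_betwE)
  then have "xtl \<rho> lam (?iv i) = (\<Sum>p\<in>{1..m}. if p \<le> ?iv i then lam (\<rho> p) else 0)"
    unfolding xtl_eq_xpt by (rule xpt_eq_sum_if)
  also have "\<dots> = (\<Sum>p\<in>{1..m}. if ?iv (\<rho> p) \<le> ?iv i then lam (\<rho> p) else 0)"
    using bij_betw_inv_into_left[OF bij] by (intro sum.cong) auto
  also have "\<dots> = (\<Sum>j\<in>{1..m}. if ?iv j \<le> ?iv i then lam j else 0)"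
    using sum.reindex_bij_betw[OF bij, of "\<lambda>j. if ?iv j \<le> ?iv i then lam j else 0"] by simp
  finally show ?thesis .
qed

lemma iet_map_eq_translation:
  assumes data: "iet_data m \<rho> lam" and i: "i \<in> {1..m}" and x: "x \<in> {xpt lam (i - 1)..<xpt lam i}"
  shows "iet_map m \<rho> lam x = x + (\<Sum>j\<in>{1..m}. skew_coeff m \<rho> i j * lam j)"
proof -
  let ?iv = "inv_into {1..m} \<rho>"
  have \<rho>: "\<rho> permutes {1..m}"
    using data unfolding iet_data_def by blast
  have iv_inj: "j = i" if "j \<in> {1..m}" "?iv j = ?iv i" for j
    using that i by (metis \<rho> f_inv_into_f permutes_image)
  have "xtl \<rho> lam (?iv i) - xpt lam i
      = (\<Sum>j\<in>{1..m}. (if ?iv j \<le> ?iv i then lam j else 0) - (if j \<le> i then lam j else 0))"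
    unfolding xtl_inv_into_eq_sum_if[OF \<rho> i] xpt_eq_sum_if[of i m lam, OF atLeastAtMost_iff[THEN iffD1, OF i, THEN conjunct2]]
    by (simp add: sum_subtractf)
  also have "\<dots> = (\<Sum>j\<in>{1..m}. skew_coeff m \<rho> i j * lam j)"
  proof (intro sum.cong refl)
    fix j
    assume "j \<in> {1..m}"
    then show "(if ?iv j \<le> ?iv i then lam j else 0) - (if j \<le> i then lam j else 0)
        = skew_coeff m \<rho> i j * lam j"
      using iv_inj[of j] unfolding skew_coeff_def
      by (cases "i < j"; cases "j < i"; cases "?iv i < ?iv j"; cases "?iv j < ?iv i") auto
  qed
  finally show ?thesis
    using iet_map_on_interval[OF iet_data_pos[OF data] i x] by simp
qed

lemma iet_map_surj:
  assumes data: "iet_data m \<rho> lam" and "0 \<le> w" "w < 1"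
  obtains x where "0 \<le> x" "x < 1" "iet_map m \<rho> lam x = w"
proof -
  have \<rho>: "\<rho> permutes {1..m}" and pos: "\<forall>i\<in>{1..m}. 0 < lam i"
    using data unfolding iet_data_def by auto
  obtain q where q: "q \<in> {1..m}" "w \<in> {xtl \<rho> lam (q - 1)..<xtl \<rho> lam q}"
    using iet_interval_exists[of m "\<lambda>j. lam (\<rho> j)" w] iet_data_permuted[OF data] assms(2,3)
    unfolding xtl_eq_xpt by blast
  define i where "i = \<rho> q"
  have i: "i \<in> {1..m}" "inv_into {1..m} \<rho> i = q"
    unfolding i_def using q(1) permutes_in_image[OF \<rho>] permutes_inj_on[OF \<rho>] by (auto simp: inv_into_f_f)
  define x where "x = w - xtl \<rho> lam q + xpt lam i"
  have "xtl \<rho> lam q - xtl \<rho> lam (q - 1) = lam i"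
    using xpt_diff[of q "\<lambda>j. lam (\<rho> j)"] q(1) unfolding i_def xtl_eq_xpt by auto
  then have x: "x \<in> {xpt lam (i - 1)..<xpt lam i}"
    unfolding x_def using q(2) xpt_diff[of i lam] i(1) by auto
  have "0 \<le> xpt lam (i - 1)" "xpt lam i \<le> 1"
    using xpt_le[OF pos, of 0 "i - 1"] xpt_le[OF pos, of i m] i(1) iet_data_total[OF data] by auto
  then have "0 \<le> x" "x < 1"
    using x by auto
  moreover have "iet_map m \<rho> lam x = w"
    using iet_map_on_interval[OF pos i(1) x] i(2) unfolding x_def by simp
  ultimately show ?thesis
    using that by blast
qed

section \<open>Leaves of the vertical foliation\<close>

lemma rtranclp_symclp_functional_injective:
  assumes functional: "\<And>u v v'. R u v \<Longrightarrow> R u v' \<Longrightarrow> v = v'"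
    and injective: "\<And>u u' v. R u v \<Longrightarrow> R u' v \<Longrightarrow> u = u'"
    and "(symclp R)\<^sup>*\<^sup>* p q"
  shows "R\<^sup>*\<^sup>* p q \<or> R\<^sup>*\<^sup>* q p"
  using assms(3)
proof (induction rule: rtranclp_induct)
  case (step w v)
  consider "R\<^sup>*\<^sup>* p w" "R w v" | "R\<^sup>*\<^sup>* w p" "R v w" | "R\<^sup>*\<^sup>* p w" "R v w" | "R\<^sup>*\<^sup>* w p" "R w v"
    using step by (auto simp: symclp_def)
  then show ?case
  proof cases
    case 3
    show ?thesis
    proof (cases "p = w")
      case False
      then obtain w' where "R\<^sup>*\<^sup>* p w'" "R w' w"
        using 3(1) by (metis rtranclp.cases)
      then show ?thesis
        using injective[OF 3(2)] by auto
    qed (use 3 in auto)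
  next
    case 4
    show ?thesis
    proof (cases "w = p")
      case False
      then obtain w' where "R w w'" "R\<^sup>*\<^sup>* w' p"
        using 4(1) by (metis converse_rtranclpE)
      then show ?thesis
        using functional[OF 4(2)] by auto
    qed (use 4 in auto)
  qed (auto intro: converse_rtranclp_into_rtranclp)
qed simp

locale double_suspension =
  fixes k :: nat and a b c d y :: "nat \<Rightarrow> real" and \<epsilon> :: real
  assumes op_system: "op_system k a b c d"
    and admissible: "admissible k y"
    and eps_ok: "eps_ok k y \<epsilon>"
begin

abbreviation "lft \<equiv> Lft k a c"
abbreviation "rgt \<equiv> Rgt k b d"
abbreviation "prt \<equiv> partner k"
abbreviation "start \<equiv> is_start k a b c d y \<epsilon>"
abbreviation "obstacle \<equiv> obst k a b c d y"
abbreviation "pass \<equiv> pass_step k a b c d y \<epsilon>"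
abbreviation "exits \<equiv> top_hit k a b c d y \<epsilon>"
abbreviation "leaf \<equiv> leaf_step k a b c d y \<epsilon>"

definition rect_shift :: "nat \<Rightarrow> real" where
  "rect_shift j = lft (prt j) - lft j"

lemma eps_pos: "0 < \<epsilon>"
  using eps_ok unfolding eps_ok_def by blast

lemma rect_bounds:
  assumes "j < 2 * k"
  shows "0 \<le> lft j" "lft j < rgt j" "rgt j \<le> 1"
  using op_system assms unfolding op_system_def Lft_def Rgt_def
  by (auto split: if_splits dest: spec[of _ "j - k"])

lemma partner_less: "j < 2 * k \<Longrightarrow> prt j < 2 * k"
  unfolding partner_def by auto

lemma partner_partner: "j < 2 * k \<Longrightarrow> prt (prt j) = j"
  unfolding partner_def by auto

lemma partner_inj: "j < 2 * k \<Longrightarrow> j' < 2 * k \<Longrightarrow> prt j = prt j' \<Longrightarrow> j = j'"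
  by (metis partner_partner)

lemma rect_width_partner:
  assumes "j < 2 * k"
  shows "rgt (prt j) - lft (prt j) = rgt j - lft j"
proof (cases "j < k")
  case True
  then have "d j - c j = b j - a j"
    using op_system unfolding op_system_def by auto
  with True show ?thesis
    unfolding partner_def Lft_def Rgt_def by auto
next
  case False
  then have "d (j - k) - c (j - k) = b (j - k) - a (j - k)"
    using op_system assms unfolding op_system_def by auto
  with False assms show ?thesis
    unfolding partner_def Lft_def Rgt_def by auto
qed

lemma rect_shift_partner: "j < 2 * k \<Longrightarrow> rect_shift (prt j) = - rect_shift j"
  unfolding rect_shift_def using partner_partner by simp

lemma y_bounds: "j < 2 * k \<Longrightarrow> 0 < y j \<and> y j + \<epsilon> < 1"
  using admissible eps_ok unfolding admissible_def eps_ok_def by auto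

lemma y_inj: "j < 2 * k \<Longrightarrow> j' < 2 * k \<Longrightarrow> y j = y j' \<Longrightarrow> j = j'"
  using admissible unfolding admissible_def inj_on_def by auto

lemma y_separated: "j < 2 * k \<Longrightarrow> j' < 2 * k \<Longrightarrow> j \<noteq> j' \<Longrightarrow> y j + \<epsilon> < y j' \<or> y j' + \<epsilon> < y j"
  using eps_ok unfolding eps_ok_def by auto

definition start_heights :: "real set" where
  "start_heights = insert 0 ((\<lambda>j. y j + \<epsilon>) ` {..<2 * k})"

lemma finite_start_heights: "finite start_heights"
  unfolding start_heights_def by auto

lemma start_height: "start p \<Longrightarrow> snd p \<in> start_heights"
  unfolding is_start_def start_heights_def by auto

lemma start_in_unit: "start p \<Longrightarrow> 0 < fst p \<and> fst p < 1"
  unfolding is_start_def by auto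

lemma start_height_below_rect:
  assumes "s \<in> start_heights" "j < 2 * k" "s < y j + \<epsilon>"
  shows "s < y j"
proof (cases "s = 0")
  case False
  then obtain j' where j': "j' < 2 * k" "s = y j' + \<epsilon>"
    using assms(1) unfolding start_heights_def by auto
  then have "j' \<noteq> j"
    using assms(3) by auto
  then show ?thesis
    using y_separated[OF j'(1) assms(2)] j' assms(3) eps_pos by auto
qed (use y_bounds[OF assms(2)] in auto)

lemma obstacle_between_starts:
  assumes "start u" "start u'" "fst u = fst u'" "snd u < snd u'"
  obtains j where "j < 2 * k" "snd u' = y j + \<epsilon>" "obstacle (fst u) (snd u) j"
proof -
  have "snd u' \<noteq> 0"
    using assms(4) start_height[OF assms(1)] y_bounds eps_pos unfolding start_heights_def by force
  then obtain j where j: "j < 2 * k" "snd u' = y j + \<epsilon>" "lft j \<le> fst u'" "fst u' \<le> rgt j"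
    using assms(2) unfolding is_start_def by auto
  have "snd u < y j"
    using start_height_below_rect[OF start_height[OF assms(1)] j(1)] assms(4) j(2) by simp
  then show ?thesis
    using that j assms(3) unfolding obst_def by auto
qed

definition first_obstacle :: "real \<times> real \<Rightarrow> nat" where
  "first_obstacle p =
    (THE j. obstacle (fst p) (snd p) j \<and> (\<forall>j'. obstacle (fst p) (snd p) j' \<longrightarrow> y j \<le> y j'))"

lemma first_obstacle_eq:
  assumes "obstacle x s j" "\<And>j'. obstacle x s j' \<Longrightarrow> y j \<le> y j'"
  shows "first_obstacle (x, s) = j"
  unfolding first_obstacle_def fst_conv snd_conv
proof (rule the_equality)
  fix j'
  assume j': "obstacle x s j' \<and> (\<forall>j''. obstacle x s j'' \<longrightarrow> y j' \<le> y j'')"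
  then have "y j = y j'"
    using assms by force
  moreover have "j < 2 * k" "j' < 2 * k"
    using assms(1) j' unfolding obst_def by auto
  ultimately show "j' = j"
    using y_inj by auto
qed (use assms in auto)

lemma first_obstacleI:
  assumes "obstacle x s j0"
  shows "obstacle x s (first_obstacle (x, s))" "\<And>j'. obstacle x s j' \<Longrightarrow> y (first_obstacle (x, s)) \<le> y j'"
proof -
  have fin: "finite {j. obstacle x s j}"
    unfolding obst_def by auto
  have "Min (y ` {j. obstacle x s j}) \<in> y ` {j. obstacle x s j}"
    using fin assms by (intro Min_in) auto
  then obtain j where j: "obstacle x s j" "y j = Min (y ` {j. obstacle x s j})"
    by auto
  have "first_obstacle (x, s) = j"
    using j fin by (intro first_obstacle_eq) auto
  then show "obstacle x s (first_obstacle (x, s))" "\<And>j'. obstacle x s j' \<Longrightarrow> y (first_obstacle (x, s)) \<le> y j'"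
    using j fin by auto
qed

lemma pass_iff:
  "pass p q \<longleftrightarrow> start p \<and> (\<exists>j. obstacle (fst p) (snd p) j)
     \<and> lft (first_obstacle p) < fst p \<and> fst p < rgt (first_obstacle p)
     \<and> q = (fst p + rect_shift (first_obstacle p), y (prt (first_obstacle p)) + \<epsilon>)"
proof
  assume "pass p q"
  then obtain j where j: "start p" "obstacle (fst p) (snd p) j"
    "\<forall>j'. obstacle (fst p) (snd p) j' \<longrightarrow> y j \<le> y j'" "lft j < fst p" "fst p < rgt j"
    "q = (fst p + (lft (prt j) - lft j), y (prt j) + \<epsilon>)"
    unfolding pass_step_def by blast
  then have "first_obstacle p = j"
    using first_obstacle_eq[of "fst p" "snd p" j] by simp
  with j show "start p \<and> (\<exists>j. obstacle (fst p) (snd p) j)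
     \<and> lft (first_obstacle p) < fst p \<and> fst p < rgt (first_obstacle p)
     \<and> q = (fst p + rect_shift (first_obstacle p), y (prt (first_obstacle p)) + \<epsilon>)"
    unfolding rect_shift_def by auto
next
  assume *: "start p \<and> (\<exists>j. obstacle (fst p) (snd p) j)
     \<and> lft (first_obstacle p) < fst p \<and> fst p < rgt (first_obstacle p)
     \<and> q = (fst p + rect_shift (first_obstacle p), y (prt (first_obstacle p)) + \<epsilon>)"
  then obtain j0 where "obstacle (fst p) (snd p) j0"
    by blast
  from first_obstacleI[OF this] * show "pass p q"
    unfolding pass_step_def rect_shift_def by auto
qed

lemma pass_first_obstacle_less: "pass p q \<Longrightarrow> first_obstacle p < 2 * k"
  using pass_iff first_obstacleI(1)[of "fst p" "snd p"] unfolding obst_def by (metis prod.collapse)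

lemma pass_functional: "pass p q \<Longrightarrow> pass p q' \<Longrightarrow> q = q'"
  using pass_iff by simp

lemma pass_start: "pass p q \<Longrightarrow> start p"
  using pass_iff by simp

lemma pass_fst: "pass p q \<Longrightarrow> fst q = fst p + rect_shift (first_obstacle p)"
  using pass_iff by simp

lemma pass_target:
  assumes "pass p q"
  shows "snd q = y (prt (first_obstacle p)) + \<epsilon>" "0 < snd q" "start q"
proof -
  have j: "first_obstacle p < 2 * k"
    using pass_first_obstacle_less[OF assms] .
  show snd: "snd q = y (prt (first_obstacle p)) + \<epsilon>"
    using assms unfolding pass_iff by auto
  then show "0 < snd q"
    using y_bounds[OF partner_less[OF j]] eps_pos by simp
  have "lft (prt (first_obstacle p)) < fst q" "fst q < rgt (prt (first_obstacle p))"
    using assms rect_width_partner[OF j] unfolding pass_iff rect_shift_def by auto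
  then show "start q"
    unfolding is_start_def using snd partner_less[OF j] rect_bounds[OF partner_less[OF j]] by force
qed

lemma pass_not_exits: "pass p q \<Longrightarrow> \<not> exits p"
  unfolding top_hit_def pass_iff by auto

lemma exits_start: "exits p \<Longrightarrow> start p"
  unfolding top_hit_def by auto

lemma same_first_obstacle_same_height:
  assumes "start u" "start u'" "fst u = fst u'"
    and "obstacle (fst u) (snd u) j0" "obstacle (fst u') (snd u') j1"
    and "first_obstacle u = first_obstacle u'"
  shows "snd u = snd u'"
proof -
  have False if v: "start v" "start v'" "fst v = fst v'" "snd v < snd v'"
      "obstacle (fst v) (snd v) i0" "obstacle (fst v') (snd v') i1"
      "first_obstacle v = first_obstacle v'" for v v' i0 i1
  proof -
    obtain j where j: "j < 2 * k" "snd v' = y j + \<epsilon>" "obstacle (fst v) (snd v) j"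
      using obstacle_between_starts[OF v(1-4)] by blast
    have "y (first_obstacle v) \<le> y j"
      using first_obstacleI(2)[OF v(5), of j] j(3) by simp
    moreover have "snd v' < y (first_obstacle v')"
      using first_obstacleI(1)[OF v(6)] unfolding obst_def by simp
    ultimately show False
      using j(2) v(7) eps_pos by simp
  qed
  from this[OF assms(1-3) _ assms(4-6)] this[OF assms(2,1) assms(3)[symmetric] _ assms(5,4) assms(6)[symmetric]]
  show ?thesis
    by (meson linorder_neqE_linordered_idom)
qed

lemma pass_injective:
  assumes "pass u q" "pass u' q"
  shows "u = u'"
proof -
  have j: "first_obstacle u < 2 * k" "first_obstacle u' < 2 * k"
    using pass_first_obstacle_less assms by auto
  have "y (prt (first_obstacle u)) = y (prt (first_obstacle u'))"
    using pass_target(1)[OF assms(1)] pass_target(1)[OF assms(2)] by simp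
  then have same: "first_obstacle u = first_obstacle u'"
    using y_inj partner_less partner_inj j by metis
  then have fst: "fst u = fst u'"
    using pass_fst[OF assms(1)] pass_fst[OF assms(2)] by simp
  have "snd u = snd u'"
    using assms same fst same_first_obstacle_same_height[of u u'] pass_start unfolding pass_iff by metis
  with fst show ?thesis
    by (simp add: prod_eq_iff)
qed

lemma exits_unique:
  assumes "exits u" "exits u'" "fst u = fst u'"
  shows "u = u'"
proof -
  have "\<not> snd u < snd u'" if "exits u" "exits u'" "fst u = fst u'" for u u'
    using obstacle_between_starts[OF exits_start[OF that(1)] exits_start[OF that(2)] that(3)] that(1)
    unfolding top_hit_def by metis
  from this[OF assms] this[OF assms(2,1) assms(3)[symmetric]] assms(3) show ?thesis
    by (simp add: prod_eq_iff)
qed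

lemma leaf_iff: "leaf p q \<longleftrightarrow> pass p q \<or> (exits p \<and> q = (fst p, 0))"
  unfolding leaf_step_def by simp

lemma leaf_functional: "leaf p q \<Longrightarrow> leaf p q' \<Longrightarrow> q = q'"
  unfolding leaf_iff using pass_functional pass_not_exits by blast

lemma leaf_injective: "leaf u q \<Longrightarrow> leaf u' q \<Longrightarrow> u = u'"
  unfolding leaf_iff using pass_injective exits_unique pass_target(2) by (metis fst_conv less_irrefl snd_conv)


definition next_start :: "real \<times> real \<Rightarrow> real \<times> real" where
  "next_start p = (THE q. pass p q)"

definition orbit :: "real \<Rightarrow> nat \<Rightarrow> real \<times> real" where
  "orbit x r = (next_start ^^ r) (x, 0)"

definition orbit_passes :: "real \<Rightarrow> nat \<Rightarrow> bool" where
  "orbit_passes x n \<longleftrightarrow> (\<forall>r<n. pass (orbit x r) (orbit x (Suc r)))"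

definition returns_at :: "real \<Rightarrow> nat \<Rightarrow> bool" where
  "returns_at x n \<longleftrightarrow> orbit_passes x n \<and> exits (orbit x n)"

definition return_time :: "real \<Rightarrow> nat" where
  "return_time x = (THE n. returns_at x n)"

definition orbit_shift :: "real \<Rightarrow> nat \<Rightarrow> real" where
  "orbit_shift x r = (\<Sum>i<r. rect_shift (first_obstacle (orbit x i)))"

lemma next_start_eq: "pass p q \<Longrightarrow> next_start p = q"
  unfolding next_start_def using pass_functional by (intro the_equality) auto

lemma orbit_0 [simp]: "orbit x 0 = (x, 0)"
  unfolding orbit_def by simp

lemma orbit_Suc: "orbit x (Suc r) = next_start (orbit x r)"
  unfolding orbit_def by simp

lemma orbit_passes_mono: "orbit_passes x n \<Longrightarrow> n' \<le> n \<Longrightarrow> orbit_passes x n'"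
  unfolding orbit_passes_def by auto

lemma orbit_passes_Suc: "orbit_passes x (Suc n) \<longleftrightarrow> orbit_passes x n \<and> pass (orbit x n) (orbit x (Suc n))"
  unfolding orbit_passes_def by (auto simp: less_Suc_eq)

lemma orbit_passes_SucI: "orbit_passes x n \<Longrightarrow> pass (orbit x n) q \<Longrightarrow> orbit_passes x (Suc n)"
  using orbit_passes_Suc orbit_Suc next_start_eq by metis

lemma rtranclp_pass_from_gamma_orbit:
  assumes "pass\<^sup>*\<^sup>* (x, 0) p"
  obtains r where "orbit_passes x r" "orbit x r = p"
  using assms
proof (induction arbitrary: thesis rule: rtranclp_induct)
  case base
  show ?case
    by (rule base[of 0]) (auto simp: orbit_passes_def)
next
  case (step q p)
  then obtain r where "orbit_passes x r" "orbit x r = q"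
    by blast
  with step show ?case
    using orbit_passes_SucI orbit_Suc next_start_eq by metis
qed

lemma orbit_snd_pos: "orbit_passes x r \<Longrightarrow> 0 < r \<Longrightarrow> 0 < snd (orbit x r)"
  by (cases r) (auto simp: orbit_passes_Suc intro: pass_target(2))

lemma orbit_inj:
  assumes "orbit_passes x r" "orbit_passes x' r'" "orbit x r = orbit x' r'"
  shows "x = x' \<and> r = r'"
  using assms
proof (induction r arbitrary: r')
  case 0
  then have "snd (orbit x' r') = 0"
    by (metis orbit_0 snd_conv)
  then have "r' = 0"
    using orbit_snd_pos[OF "0.prems"(2)] by (metis less_irrefl neq0_conv)
  with "0.prems" show ?case
    by simp
next
  case (Suc r)
  show ?case
  proof (cases r')
    case 0
    then have "snd (orbit x (Suc r)) = 0"
      using Suc.prems(3) by (metis orbit_0 snd_conv)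
    then show ?thesis
      using orbit_snd_pos[OF Suc.prems(1)] by simp
  next
    case (Suc r0)
    have "pass (orbit x r) (orbit x (Suc r))" "pass (orbit x' r0) (orbit x' (Suc r0))"
      using Suc.prems Suc orbit_passes_Suc by auto
    then have "orbit x r = orbit x' r0"
      using pass_injective Suc.prems(3) Suc by metis
    then show ?thesis
      using Suc.IH[of r0] Suc.prems Suc orbit_passes_Suc by auto
  qed
qed

lemma returns_at_bound: "returns_at x n \<Longrightarrow> orbit_passes x n' \<Longrightarrow> n' \<le> n"
  unfolding returns_at_def orbit_passes_def using pass_not_exits not_le by blast

lemma return_time_eq: "returns_at x n \<Longrightarrow> return_time x = n"
  unfolding return_time_def using returns_at_bound returns_at_def
  by (intro the_equality) (auto intro: order.antisym)

lemma orbit_fst: "orbit_passes x r \<Longrightarrow> fst (orbit x r) = x + orbit_shift x r"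
proof (induction r)
  case (Suc r)
  then have "orbit_passes x r" "pass (orbit x r) (orbit x (Suc r))"
    using orbit_passes_Suc by auto
  then show ?case
    using Suc.IH pass_fst[of "orbit x r"] unfolding orbit_shift_def by simp
qed (simp add: orbit_shift_def)

lemma orbit_start:
  assumes "orbit_passes x r" "0 < x" "x < 1"
  shows "start (orbit x r)"
proof (cases r)
  case 0
  then show ?thesis
    using assms by (simp add: is_start_def)
next
  case (Suc r0)
  then show ?thesis
    using assms(1) pass_target(3) orbit_passes_Suc by blast
qed

definition rect_sides :: "real set" where
  "rect_sides = lft ` {..<2 * k} \<union> rgt ` {..<2 * k}"

lemma finite_rect_sides: "finite rect_sides"
  unfolding rect_sides_def by auto

definition same_cell :: "real \<Rightarrow> real \<Rightarrow> bool" where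
  "same_cell u u' \<longleftrightarrow> (\<forall>c\<in>rect_sides. (c < u \<longleftrightarrow> c < u') \<and> (u < c \<longleftrightarrow> u' < c))"

lemma same_cell_near:
  assumes "\<And>c. c \<in> rect_sides \<Longrightarrow> \<bar>h\<bar> < \<bar>u - c\<bar>"
  shows "same_cell u (u + h)"
  unfolding same_cell_def
proof
  fix c
  assume "c \<in> rect_sides"
  then have "\<bar>h\<bar> < \<bar>u - c\<bar>"
    by (rule assms)
  then show "(c < u \<longleftrightarrow> c < u + h) \<and> (u < c \<longleftrightarrow> u + h < c)"
    by linarith
qed

lemma same_cell_rect:
  assumes "same_cell u u'" "j < 2 * k"
  shows "(lft j \<le> u \<longleftrightarrow> lft j \<le> u') \<and> (u \<le> rgt j \<longleftrightarrow> u' \<le> rgt j)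
    \<and> (lft j < u \<longleftrightarrow> lft j < u') \<and> (u < rgt j \<longleftrightarrow> u' < rgt j)"
proof -
  have "lft j \<in> rect_sides" "rgt j \<in> rect_sides"
    using assms(2) unfolding rect_sides_def by auto
  then show ?thesis
    using assms(1) unfolding same_cell_def by (meson not_less)
qed

lemma same_cell_obstacle: "same_cell u u' \<Longrightarrow> obstacle u s j \<longleftrightarrow> obstacle u' s j"
  unfolding obst_def using same_cell_rect by blast

lemma same_cell_first_obstacle: "same_cell u u' \<Longrightarrow> first_obstacle (u, s) = first_obstacle (u', s)"
  unfolding first_obstacle_def fst_conv snd_conv using same_cell_obstacle by presburger

lemma same_cell_start: "same_cell u u' \<Longrightarrow> 0 < u' \<Longrightarrow> u' < 1 \<Longrightarrow> start (u, s) \<Longrightarrow> start (u', s)"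
  unfolding is_start_def using same_cell_rect by auto

lemma same_cell_pass:
  assumes "same_cell u u'" "0 < u'" "u' < 1" "pass (u, s) q"
  shows "pass (u', s) (fst q + (u' - u), snd q)"
proof -
  have fo: "first_obstacle (u', s) = first_obstacle (u, s)"
    using same_cell_first_obstacle assms(1) by simp
  have j: "first_obstacle (u, s) < 2 * k"
    using pass_first_obstacle_less[OF assms(4)] .
  show ?thesis
    unfolding pass_iff
    using assms(4) same_cell_start[OF assms(1-3) pass_start[OF assms(4)]]
      same_cell_obstacle[OF assms(1)] same_cell_rect[OF assms(1) j]
    unfolding pass_iff fo by auto
qed

lemma same_cell_exits: "same_cell u u' \<Longrightarrow> 0 < u' \<Longrightarrow> u' < 1 \<Longrightarrow> exits (u, s) \<Longrightarrow> exits (u', s)"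
  using same_cell_start same_cell_obstacle unfolding top_hit_def by auto

lemma orbit_translate:
  assumes "0 < x'" "x' < 1" "orbit_passes x n"
    and "\<And>r. r \<le> n \<Longrightarrow> same_cell (fst (orbit x r)) (fst (orbit x r) + (x' - x))"
  shows "orbit_passes x' n \<and> (\<forall>r\<le>n. orbit x' r = (fst (orbit x r) + (x' - x), snd (orbit x r)))"
  using assms(3,4)
proof (induction n)
  case 0
  then show ?case
    by (simp add: orbit_passes_def)
next
  case (Suc n)
  then have IH: "orbit_passes x' n" "\<forall>r\<le>n. orbit x' r = (fst (orbit x r) + (x' - x), snd (orbit x r))"
    using orbit_passes_mono by auto
  have "0 < fst (orbit x' n) \<and> fst (orbit x' n) < 1"
    using orbit_start[OF IH(1) assms(1,2)] start_in_unit by blast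
  then have "pass (fst (orbit x n) + (x' - x), snd (orbit x n))
      (fst (orbit x (Suc n)) + (x' - x), snd (orbit x (Suc n)))"
    using same_cell_pass[of "fst (orbit x n)" "fst (orbit x n) + (x' - x)" "snd (orbit x n)" "orbit x (Suc n)"]
      Suc.prems IH(2) by (simp add: orbit_passes_Suc)
  then have "pass (orbit x' n) (fst (orbit x (Suc n)) + (x' - x), snd (orbit x (Suc n)))"
    using IH(2) by simp
  then show ?case
    using IH orbit_passes_SucI orbit_Suc next_start_eq by (auto simp: le_Suc_eq)
qed

lemma pass_from_below:
  assumes j: "j < 2 * k" and z: "lft j < z" "z < rgt j"
  obtains h where "pass (z, h) (z + rect_shift j, y (prt j) + \<epsilon>)" "first_obstacle (z, h) = j"
proof -
  have z01: "0 < z" "z < 1"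
    using rect_bounds[OF j] z by linarith+
  define S where "S = {h. start (z, h) \<and> h < y j}"
  have "S \<subseteq> start_heights"
    unfolding S_def using start_height by force
  then have "finite S"
    using finite_start_heights finite_subset by blast
  moreover have "0 \<in> S"
    unfolding S_def is_start_def using z01 y_bounds[OF j] by auto
  ultimately have h: "Max S \<in> S" "\<And>h'. h' \<in> S \<Longrightarrow> h' \<le> Max S"
    using Max_in Max_ge by blast+
  have obs: "obstacle z (Max S) j"
    using h(1) j z unfolding S_def obst_def by auto
  have "y j \<le> y j'" if "obstacle z (Max S) j'" for j'
  proof (rule ccontr)
    assume "\<not> y j \<le> y j'"
    then have "y j' + \<epsilon> < y j"
      using y_separated[of j' j] j that unfolding obst_def by fastforce
    then have "y j' + \<epsilon> \<in> S"
      unfolding S_def is_start_def using that z01 unfolding obst_def by auto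
    then show False
      using h(2) that eps_pos unfolding obst_def by fastforce
  qed
  then have "first_obstacle (z, Max S) = j"
    using first_obstacle_eq obs by blast
  moreover have "pass (z, Max S) (z + rect_shift j, y (prt j) + \<epsilon>)"
    unfolding pass_iff using calculation obs z h(1) unfolding S_def by auto
  ultimately show ?thesis
    using that by blast
qed

lemma rtranclp_leaf_from_gamma:
  assumes "leaf\<^sup>*\<^sup>* (x, 0) p" "start p"
  obtains x' where "0 < x'" "x' < 1" "pass\<^sup>*\<^sup>* (x', 0) p"
proof -
  from assms have "\<exists>x'. 0 < x' \<and> x' < 1 \<and> pass\<^sup>*\<^sup>* (x', 0) p"
  proof (induction rule: rtranclp_induct)
    case base
    then show ?case
      using start_in_unit by force
  next
    case (step w v)
    from step.hyps(2) consider "pass w v" | "exits w" "v = (fst w, 0)"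
      unfolding leaf_iff by blast
    then show ?case
    proof cases
      case 1
      then obtain x' where "0 < x'" "x' < 1" "pass\<^sup>*\<^sup>* (x', 0) w"
        using step.IH pass_start by blast
      then show ?thesis
        using rtranclp.rtrancl_into_rtrancl[of pass _ w v] 1 by blast
    next
      case 2
      have "0 < fst w \<and> fst w < 1"
        using start_in_unit[OF exits_start[OF 2(1)]] .
      then show ?thesis
        using 2(2) by (intro exI[of _ "fst w"]) auto
    qed
  qed
  then show ?thesis
    using that by blast
qed

lemma rtranclp_leaf_to_gamma:
  assumes "leaf\<^sup>*\<^sup>* p q" "snd q = 0" "snd p \<noteq> 0"
  obtains t where "pass\<^sup>*\<^sup>* p t" "exits t"
proof -
  from assms have "\<exists>t. pass\<^sup>*\<^sup>* p t \<and> exits t"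
  proof (induction rule: converse_rtranclp_induct)
    case (step u w)
    from step.hyps(1) consider "pass u w" | "exits u"
      unfolding leaf_iff by blast
    then show ?case
    proof cases
      case 1
      then obtain t where "pass\<^sup>*\<^sup>* w t" "exits t"
        using step.IH step.prems pass_target(2)[OF 1] by auto
      then show ?thesis
        using converse_rtranclp_into_rtranclp[of pass u w] 1 by blast
    qed blast
  qed simp
  then show ?thesis
    using that by blast
qed

text \<open>This is where filling enters: the leaf through any start reaches \<open>\<gamma>\<close>, and as leaf
  steps are functional and injective it does so either forwards or backwards.\<close>

lemma start_connected_to_gamma:
  assumes "fills k a b c d y \<epsilon>" "start p"
  obtains x where "0 < x" "x < 1" "pass\<^sup>*\<^sup>* (x, 0) p"
    | t where "pass\<^sup>*\<^sup>* p t" "exits t"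
proof -
  obtain x' where "(symclp leaf)\<^sup>*\<^sup>* p (x', 0)"
    using assms unfolding fills_def symclp_def by blast
  then have "leaf\<^sup>*\<^sup>* p (x', 0) \<or> leaf\<^sup>*\<^sup>* (x', 0) p"
    by (rule rtranclp_symclp_functional_injective[rotated 2]) (metis leaf_functional, metis leaf_injective)
  then consider "leaf\<^sup>*\<^sup>* p (x', 0)" | "leaf\<^sup>*\<^sup>* (x', 0) p"
    by blast
  then show ?thesis
  proof cases
    case 1
    show ?thesis
    proof (cases "snd p = 0")
      case True
      then show ?thesis
        using that(1)[of "fst p"] start_in_unit[OF assms(2)] by (metis prod.collapse rtranclp.rtrancl_refl)
    qed (use rtranclp_leaf_to_gamma[OF 1] that(2) in auto)
  next
    case 2
    then show ?thesis
      using rtranclp_leaf_from_gamma[OF 2 assms(2)] that(1) by blast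
  qed
qed

lemma orbit_through_pass_predecessor:
  assumes "pass\<^sup>*\<^sup>* p w" "orbit_passes x n" "orbit x n = w"
  obtains r where "r \<le> n" "orbit x r = p"
proof -
  from assms have "\<exists>r\<le>n. orbit x r = p"
  proof (induction arbitrary: n rule: rtranclp_induct)
    case (step w v)
    show ?case
    proof (cases n)
      case 0
      then show ?thesis
        using step.prems(2) pass_target(2)[OF step.hyps(2)] by auto
    next
      case (Suc n0)
      then have "pass (orbit x n0) (orbit x n)" "orbit_passes x n0"
        using step.prems(1) orbit_passes_Suc by auto
      then have "orbit x n0 = w"
        using pass_injective step.hyps(2) step.prems(2) by metis
      then obtain r where "r \<le> n0" "orbit x r = p"
        using step.IH \<open>orbit_passes x n0\<close> by blast
      with Suc show ?thesis
        by (intro exI[of _ r]) auto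
    qed
  qed blast
  then show ?thesis
    using that by blast
qed

lemma rtranclp_pass_funpow:
  assumes "pass\<^sup>*\<^sup>* p w"
  shows "\<exists>r. (next_start ^^ r) p = w \<and> (\<forall>i<r. pass ((next_start ^^ i) p) ((next_start ^^ Suc i) p))"
  using assms
proof (induction rule: rtranclp_induct)
  case base
  show ?case
    by (intro exI[of _ 0]) auto
next
  case (step w v)
  then obtain r where r: "(next_start ^^ r) p = w" "\<forall>i<r. pass ((next_start ^^ i) p) ((next_start ^^ Suc i) p)"
    by blast
  then have "(next_start ^^ Suc r) p = v"
    using step.hyps(2) next_start_eq by simp
  with r step.hyps(2) show ?case
    by (intro exI[of _ "Suc r"]) (auto simp: less_Suc_eq)
qed

lemma funpow_pass_chain_inj:
  assumes "\<forall>i<r. pass ((next_start ^^ i) p) ((next_start ^^ Suc i) p)"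
    and "\<forall>i<r. pass ((next_start ^^ i) p') ((next_start ^^ Suc i) p')"
    and "(next_start ^^ r) p = (next_start ^^ r) p'"
  shows "p = p'"
  using assms
proof (induction r arbitrary: p p')
  case (Suc r)
  have "\<forall>i<r. pass ((next_start ^^ i) (next_start p)) ((next_start ^^ Suc i) (next_start p))"
    "\<forall>i<r. pass ((next_start ^^ i) (next_start p')) ((next_start ^^ Suc i) (next_start p'))"
    "(next_start ^^ r) (next_start p) = (next_start ^^ r) (next_start p')"
    using Suc.prems by (auto simp: funpow_Suc_right simp del: funpow.simps)
  then have "next_start p = next_start p'"
    by (rule Suc.IH)
  moreover have "pass p (next_start p)" "pass p' (next_start p')"
    using Suc.prems(1,2) by auto
  ultimately show ?case
    using pass_injective by metis
qed simp

lemma countable_pass_predecessors: "countable {p. pass\<^sup>*\<^sup>* p w}"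
proof -
  define N where "N p = (LEAST r. (next_start ^^ r) p = w
    \<and> (\<forall>i<r. pass ((next_start ^^ i) p) ((next_start ^^ Suc i) p)))" for p
  have N: "(next_start ^^ N p) p = w \<and> (\<forall>i<N p. pass ((next_start ^^ i) p) ((next_start ^^ Suc i) p))"
    if "pass\<^sup>*\<^sup>* p w" for p
    unfolding N_def using rtranclp_pass_funpow[OF that] by (rule LeastI_ex)
  have "inj_on N {p. pass\<^sup>*\<^sup>* p w}"
  proof (rule inj_onI)
    fix p p'
    assume "p \<in> {p. pass\<^sup>*\<^sup>* p w}" "p' \<in> {p. pass\<^sup>*\<^sup>* p w}" "N p = N p'"
    then show "p = p'"
      using N[of p] N[of p'] funpow_pass_chain_inj[of "N p" p p'] by auto
  qed
  then show ?thesis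
    by (rule countableI)
qed

end

section \<open>The translations of a filling exchange\<close>

locale filling_suspension = double_suspension +
  fixes m :: nat and \<rho> :: "nat \<Rightarrow> nat" and lam :: "nat \<Rightarrow> real" and F :: "real set"
  assumes iet: "iet_data m \<rho> lam"
    and finite_F: "finite F"
    and first_return: "\<forall>x\<in>{0<..<1} - F. first_return k a b c d y \<epsilon> x (iet_map m \<rho> lam x)"
    and fills: "fills k a b c d y \<epsilon>"
begin

abbreviation "T \<equiv> iet_map m \<rho> lam"

lemma returns_to_T:
  assumes "x \<in> {0<..<1} - F"
  shows "returns_at x (return_time x)" "fst (orbit x (return_time x)) = T x"
proof -
  obtain s where s: "pass\<^sup>*\<^sup>* (x, 0) (T x, s)" "exits (T x, s)"
    using first_return assms unfolding first_return_def by blast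
  obtain r where r: "orbit_passes x r" "orbit x r = (T x, s)"
    using rtranclp_pass_from_gamma_orbit[OF s(1)] by blast
  then have "returns_at x r"
    using s(2) unfolding returns_at_def by simp
  moreover from this have "return_time x = r"
    by (rule return_time_eq)
  ultimately show "returns_at x (return_time x)" "fst (orbit x (return_time x)) = T x"
    using r(2) by auto
qed

definition critical_starts :: "real set" where
  "critical_starts = {x \<in> {0<..<1} - F. \<exists>r\<le>return_time x. fst (orbit x r) \<in> rect_sides}"

text \<open>Distinct orbits never meet, so choosing on each such orbit a start above a rectangle
  side is injective into a finite set.\<close>

lemma finite_critical_starts: "finite critical_starts"
proof -
  have "\<forall>x\<in>critical_starts. \<exists>r. r \<le> return_time x \<and> fst (orbit x r) \<in> rect_sides"
    unfolding critical_starts_def by blast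
  then have "\<exists>R. \<forall>x\<in>critical_starts. R x \<le> return_time x \<and> fst (orbit x (R x)) \<in> rect_sides"
    by (rule bchoice)
  then obtain R where "\<forall>x\<in>critical_starts. R x \<le> return_time x \<and> fst (orbit x (R x)) \<in> rect_sides"
    by blast
  then have R: "R x \<le> return_time x" "fst (orbit x (R x)) \<in> rect_sides" if "x \<in> critical_starts" for x
    using that by auto
  have passes: "orbit_passes x (R x)" if "x \<in> critical_starts" for x
    using returns_to_T(1) R(1)[OF that] that orbit_passes_mono
    unfolding critical_starts_def returns_at_def by blast
  have "inj_on (\<lambda>x. orbit x (R x)) critical_starts"
    using orbit_inj[OF passes passes] by (intro inj_onI) blast
  moreover have "(\<lambda>x. orbit x (R x)) ` critical_starts \<subseteq> rect_sides \<times> start_heights"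
  proof (rule image_subsetI)
    fix x
    assume x: "x \<in> critical_starts"
    then have "start (orbit x (R x))"
      using orbit_start[OF passes[OF x]] unfolding critical_starts_def by auto
    then show "orbit x (R x) \<in> rect_sides \<times> start_heights"
      using R(2)[OF x] start_height by (simp add: mem_Times_iff)
  qed
  ultimately show ?thesis
    using inj_on_finite finite_rect_sides finite_start_heights by blast
qed

text \<open>Outside this finite set of cuts, the itinerary of a start on \<open>\<gamma>\<close> is locally
  constant.\<close>

definition cuts :: "real set" where
  "cuts = (F \<inter> {0..1}) \<union> critical_starts \<union> xpt lam ` {0..m}"

lemma finite_cuts: "finite cuts"
  unfolding cuts_def using finite_F finite_critical_starts by auto

lemma xpt_in_unit: "i \<le> m \<Longrightarrow> xpt lam i \<in> {0..1}"
  using xpt_le[OF iet_data_pos[OF iet], of 0 i] xpt_le[OF iet_data_pos[OF iet], of i m]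
    iet_data_total[OF iet] by auto

lemma xpt_in_cuts: "i \<le> m \<Longrightarrow> xpt lam i \<in> cuts"
  unfolding cuts_def by auto

lemma cuts_subset_unit: "cuts \<subseteq> {0..1}"
  unfolding cuts_def critical_starts_def using xpt_in_unit by auto

lemma not_in_cuts: "x \<in> {0<..<1} - cuts \<Longrightarrow> x \<in> {0<..<1} - F \<and> x \<notin> critical_starts"
  unfolding cuts_def by auto

abbreviation "pieces \<equiv> gaps cuts"

lemma piece_subset: "P \<in> pieces \<Longrightarrow> {fst P<..<snd P} \<subseteq> {0<..<1} - cuts"
  using gapsD[of P cuts] cuts_subset_unit by fastforce

lemma pieces_cover:
  assumes "z \<in> {0<..<1} - cuts"
  obtains P where "P \<in> pieces" "z \<in> {fst P<..<snd P}"
  using gaps_cover[OF finite_cuts, of z 0 1] xpt_in_cuts[of 0] xpt_in_cuts[of m] iet_data_total[OF iet]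
    assms that by auto

lemma regular_start_orbit:
  assumes "x \<in> {0<..<1} - cuts"
  shows "returns_at x (return_time x)"
    and "T x = x + orbit_shift x (return_time x)"
    and "r < return_time x \<Longrightarrow> pass (orbit x r) (orbit x (Suc r))"
    and "r \<le> return_time x \<Longrightarrow> fst (orbit x r) = x + orbit_shift x r"
proof -
  have x: "x \<in> {0<..<1} - F"
    using not_in_cuts[OF assms] by simp
  show "returns_at x (return_time x)"
    using returns_to_T(1)[OF x] .
  then have passes: "orbit_passes x (return_time x)"
    unfolding returns_at_def by simp
  show "T x = x + orbit_shift x (return_time x)"
    using returns_to_T(2)[OF x] orbit_fst[OF passes] by simp
  show "r < return_time x \<Longrightarrow> pass (orbit x r) (orbit x (Suc r))"
    using passes unfolding orbit_passes_def by simp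
  show "r \<le> return_time x \<Longrightarrow> fst (orbit x r) = x + orbit_shift x r"
    using orbit_fst orbit_passes_mono[OF passes] by simp
qed

definition itinerary :: "real \<Rightarrow> nat \<times> (nat \<Rightarrow> nat)" where
  "itinerary x = (return_time x, \<lambda>r. if r < return_time x then first_obstacle (orbit x r) else 0)"

lemma itinerary_locally_constant:
  assumes x: "x \<in> {0<..<1} - cuts"
  obtains \<eta> where "0 < \<eta>" "\<And>x'. 0 < x' \<Longrightarrow> x' < 1 \<Longrightarrow> \<bar>x' - x\<bar> < \<eta> \<Longrightarrow> itinerary x' = itinerary x"
proof -
  define n where "n = return_time x"
  have ret: "returns_at x n"
    using regular_start_orbit(1)[OF x] unfolding n_def .
  have noncrit: "fst (orbit x r) \<notin> rect_sides" if "r \<le> n" for r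
    using not_in_cuts[OF x] that unfolding critical_starts_def n_def by auto
  define E where "E = (\<lambda>(r, c). \<bar>fst (orbit x r) - c\<bar>) ` ({..n} \<times> rect_sides)"
  define \<eta> where "\<eta> = Min (insert 1 E)"
  have "finite E" "\<forall>e\<in>E. 0 < e"
    unfolding E_def using finite_rect_sides noncrit by auto
  then have "0 < \<eta>"
    unfolding \<eta>_def by simp
  have \<eta>_le: "\<eta> \<le> \<bar>fst (orbit x r) - c\<bar>" if "r \<le> n" "c \<in> rect_sides" for r c
    unfolding \<eta>_def E_def using \<open>finite E\<close> that unfolding E_def by (intro Min_le) auto
  have "itinerary x' = itinerary x" if x': "0 < x'" "x' < 1" "\<bar>x' - x\<bar> < \<eta>" for x'
  proof -
    have cell: "same_cell (fst (orbit x r)) (fst (orbit x r) + (x' - x))" if "r \<le> n" for r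
      using \<eta>_le[OF that] x'(3) by (intro same_cell_near) fastforce
    from orbit_translate[OF x'(1,2) _ cell] ret
    have passes': "orbit_passes x' n"
      and orbit': "\<And>r. r \<le> n \<Longrightarrow> orbit x' r = (fst (orbit x r) + (x' - x), snd (orbit x r))"
      unfolding returns_at_def by auto
    have "0 < fst (orbit x' n) \<and> fst (orbit x' n) < 1"
      using start_in_unit[OF orbit_start[OF passes' x'(1,2)]] .
    then have "exits (orbit x' n)"
      using same_cell_exits[of "fst (orbit x n)" "fst (orbit x n) + (x' - x)" "snd (orbit x n)"]
        cell[of n] ret orbit'[of n] unfolding returns_at_def by simp
    then have "return_time x' = n"
      using passes' return_time_eq unfolding returns_at_def by blast
    moreover have "first_obstacle (orbit x' r) = first_obstacle (orbit x r)" if "r \<le> n" for r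
      using orbit'[OF that] same_cell_first_obstacle cell[OF that]
      by (metis prod.collapse)
    ultimately show ?thesis
      unfolding itinerary_def n_def by (auto simp: fun_eq_iff)
  qed
  with \<open>0 < \<eta>\<close> show ?thesis
    using that by blast
qed

lemma itinerary_constant_on_piece:
  assumes P: "P \<in> pieces" and "x \<in> {fst P<..<snd P}" "x' \<in> {fst P<..<snd P}"
  shows "itinerary x = itinerary x'"
proof -
  have "\<forall>u\<in>{fst P<..<snd P}. eventually (\<lambda>v. itinerary u = itinerary v) (at u within {fst P<..<snd P})"
  proof
    fix u
    assume u: "u \<in> {fst P<..<snd P}"
    then obtain \<eta> where "0 < \<eta>" "\<And>v. 0 < v \<Longrightarrow> v < 1 \<Longrightarrow> \<bar>v - u\<bar> < \<eta> \<Longrightarrow> itinerary v = itinerary u"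
      using itinerary_locally_constant piece_subset[OF P] by blast
    then show "eventually (\<lambda>v. itinerary u = itinerary v) (at u within {fst P<..<snd P})"
      unfolding eventually_at using piece_subset[OF P] by (intro exI[of _ \<eta>]) (auto simp: dist_real_def)
  qed
  then show ?thesis
    using connected_local_const[of "{fst P<..<snd P}" x x' itinerary] assms(2,3) by auto
qed

definition piece_mid :: "real \<times> real \<Rightarrow> real" where
  "piece_mid P = (fst P + snd P) / 2"

definition piece_time :: "real \<times> real \<Rightarrow> nat" where
  "piece_time P = return_time (piece_mid P)"

definition piece_rect :: "real \<times> real \<Rightarrow> nat \<Rightarrow> nat" where
  "piece_rect P r = first_obstacle (orbit (piece_mid P) r)"

definition piece_offset :: "real \<times> real \<Rightarrow> nat \<Rightarrow> real" where
  "piece_offset P r = orbit_shift (piece_mid P) r"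

lemma piece_mid_in: "P \<in> pieces \<Longrightarrow> piece_mid P \<in> {fst P<..<snd P}"
  using gapsD(3) unfolding piece_mid_def by auto

lemma piece_itinerary:
  assumes P: "P \<in> pieces" and x: "x \<in> {fst P<..<snd P}"
  shows "return_time x = piece_time P"
    and "r < piece_time P \<Longrightarrow> first_obstacle (orbit x r) = piece_rect P r"
    and "r \<le> piece_time P \<Longrightarrow> orbit_shift x r = piece_offset P r"
proof -
  have it: "itinerary x = itinerary (piece_mid P)"
    using itinerary_constant_on_piece[OF P x piece_mid_in[OF P]] .
  then show n: "return_time x = piece_time P"
    unfolding itinerary_def piece_time_def by simp
  have "(if r < return_time x then first_obstacle (orbit x r) else 0)
      = (if r < piece_time P then piece_rect P r else 0)" for r
    using fun_cong[OF arg_cong[OF it, of snd], of r] unfolding itinerary_def piece_time_def piece_rect_def by simp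
  then show rect: "r < piece_time P \<Longrightarrow> first_obstacle (orbit x r) = piece_rect P r" for r
    using n by metis
  show "r \<le> piece_time P \<Longrightarrow> orbit_shift x r = piece_offset P r"
    unfolding orbit_shift_def piece_offset_def using rect unfolding piece_rect_def by (intro sum.cong) auto
qed

lemma T_on_piece:
  assumes "P \<in> pieces" "x \<in> {fst P<..<snd P}"
  shows "T x = x + piece_offset P (piece_time P)"
  using regular_start_orbit(2)[of x] piece_subset[OF assms(1)] assms(2) piece_itinerary[OF assms] by auto

definition pieces_in :: "nat \<Rightarrow> (real \<times> real) set" where
  "pieces_in i = {P\<in>pieces. xpt lam (i - 1) \<le> fst P \<and> snd P \<le> xpt lam i}"

lemma additive_lam_eq_sum_pieces_in:
  assumes "additive f" "i \<in> {1..m}"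
  shows "f (lam i) = (\<Sum>P\<in>pieces_in i. f (snd P - fst P))"
  using additive_sum_gaps[OF finite_cuts assms(1) xpt_in_cuts xpt_in_cuts, of "i - 1" i]
    xpt_le[OF iet_data_pos[OF iet], of "i - 1" i] xpt_diff[of i lam] assms(2)
  unfolding pieces_in_def by auto

lemma pieces_in_offset:
  assumes i: "i \<in> {1..m}" and P: "P \<in> pieces_in i"
  shows "piece_offset P (piece_time P) = (\<Sum>j\<in>{1..m}. skew_coeff m \<rho> i j * lam j)"
proof -
  have P': "P \<in> pieces" and mid: "piece_mid P \<in> {fst P<..<snd P}"
    using P piece_mid_in unfolding pieces_in_def by auto
  then have "piece_mid P \<in> {xpt lam (i - 1)..<xpt lam i}"
    using P unfolding pieces_in_def by auto
  from iet_map_eq_translation[OF iet i this] T_on_piece[OF P' mid] show ?thesis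
    by simp
qed

lemma pieces_in_partition:
  shows "pieces = (\<Union>i\<in>{1..m}. pieces_in i)"
    and "\<And>i i'. i \<in> {1..m} \<Longrightarrow> i' \<in> {1..m} \<Longrightarrow> i \<noteq> i' \<Longrightarrow> pieces_in i \<inter> pieces_in i' = {}"
proof -
  have "P \<in> (\<Union>i\<in>{1..m}. pieces_in i)" if P: "P \<in> pieces" for P
  proof -
    have "0 \<le> piece_mid P" "piece_mid P < 1"
      using piece_mid_in[OF P] piece_subset[OF P] by auto
    then obtain i where i: "i \<in> {1..m}" "piece_mid P \<in> {xpt lam (i - 1)..<xpt lam i}"
      using iet_interval_exists[OF iet_data_pos[OF iet] iet_data_total[OF iet]] by blast
    then have "xpt lam (i - 1) \<le> fst P" "snd P \<le> xpt lam i"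
      using gap_not_straddling[OF P xpt_in_cuts, of "i - 1"] gap_not_straddling[OF P xpt_in_cuts, of i]
        piece_mid_in[OF P] by auto
    with P i(1) show ?thesis
      unfolding pieces_in_def by auto
  qed
  then show "pieces = (\<Union>i\<in>{1..m}. pieces_in i)"
    unfolding pieces_in_def by blast
  show "pieces_in i \<inter> pieces_in i' = {}" if "i \<in> {1..m}" "i' \<in> {1..m}" "i \<noteq> i'" for i i'
  proof -
    have "piece_mid P \<in> {xpt lam (i - 1)..<xpt lam i}" if "P \<in> pieces_in i" for P i
      using that piece_mid_in unfolding pieces_in_def by fastforce
    then show ?thesis
      using iet_interval_unique[OF iet_data_pos[OF iet]] that by blast
  qed
qed

lemma sum_lam_eq_sum_pieces:
  fixes f g :: "real \<Rightarrow> real"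
  assumes "additive f"
  shows "(\<Sum>i\<in>{1..m}. f (lam i) * g (\<Sum>j\<in>{1..m}. skew_coeff m \<rho> i j * lam j))
    = (\<Sum>P\<in>pieces. f (snd P - fst P) * g (piece_offset P (piece_time P)))"
proof -
  have "(\<Sum>P\<in>pieces. f (snd P - fst P) * g (piece_offset P (piece_time P)))
      = (\<Sum>i\<in>{1..m}. \<Sum>P\<in>pieces_in i. f (snd P - fst P) * g (piece_offset P (piece_time P)))"
    unfolding pieces_in_partition(1)
  proof (rule sum.UNION_disjoint)
    show "\<forall>i\<in>{1..m}. finite (pieces_in i)"
      unfolding pieces_in_def using finite_gaps[OF finite_cuts] by auto
  qed (use pieces_in_partition(2) in auto)
  also have "\<dots> = (\<Sum>i\<in>{1..m}. f (lam i) * g (\<Sum>j\<in>{1..m}. skew_coeff m \<rho> i j * lam j))"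
    using pieces_in_offset additive_lam_eq_sum_pieces_in[OF assms]
    by (intro sum.cong refl) (simp add: sum_distrib_right)
  finally show ?thesis ..
qed

definition passages :: "nat \<Rightarrow> ((real \<times> real) \<times> nat) set" where
  "passages j = {(P, r). P \<in> pieces \<and> r < piece_time P \<and> piece_rect P r = j}"

lemma finite_passages: "finite (passages j)"
  by (rule finite_subset[of _ "Sigma pieces (\<lambda>P. {..<piece_time P})"])
    (auto simp: passages_def finite_gaps[OF finite_cuts])

lemma passage_rect_less: "P \<in> pieces \<Longrightarrow> r < piece_time P \<Longrightarrow> piece_rect P r < 2 * k"
  using pass_first_obstacle_less regular_start_orbit(3) piece_mid_in piece_subset
  unfolding piece_rect_def piece_time_def by blast

lemma sum_pieces_eq_sum_passages:
  fixes f g :: "real \<Rightarrow> real"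
  assumes "additive g"
  shows "(\<Sum>P\<in>pieces. f (snd P - fst P) * g (piece_offset P (piece_time P)))
    = (\<Sum>j<2 * k. g (rect_shift j) * (\<Sum>q\<in>passages j. f (snd (fst q) - fst (fst q))))"
proof -
  define S where "S = Sigma pieces (\<lambda>P. {..<piece_time P})"
  have "(\<Sum>P\<in>pieces. f (snd P - fst P) * g (piece_offset P (piece_time P)))
      = (\<Sum>P\<in>pieces. \<Sum>r<piece_time P. f (snd P - fst P) * g (rect_shift (piece_rect P r)))"
    unfolding piece_offset_def orbit_shift_def piece_rect_def piece_time_def
      additive.sum[OF assms] sum_distrib_left ..
  also have "\<dots> = (\<Sum>q\<in>S. f (snd (fst q) - fst (fst q)) * g (rect_shift (piece_rect (fst q) (snd q))))"
    unfolding S_def using finite_gaps[OF finite_cuts] by (subst sum.Sigma) (auto simp: case_prod_beta)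
  also have "\<dots> = (\<Sum>j<2 * k. \<Sum>q\<in>{q\<in>S. piece_rect (fst q) (snd q) = j}.
      f (snd (fst q) - fst (fst q)) * g (rect_shift (piece_rect (fst q) (snd q))))"
    using passage_rect_less finite_gaps[OF finite_cuts]
    by (intro sum.group[symmetric]) (auto simp: S_def)
  also have "\<dots> = (\<Sum>j<2 * k. g (rect_shift j) * (\<Sum>q\<in>passages j. f (snd (fst q) - fst (fst q))))"
    unfolding sum_distrib_left
    by (intro sum.cong) (auto simp: S_def passages_def mult.commute)
  finally show ?thesis .
qed

lemma sum_partner_pairs_vanishes:
  fixes f g :: "real \<Rightarrow> real"
  assumes "additive g"
  shows "(\<Sum>j<2 * k. g (rect_shift j) * f (rgt j - lft j)) = 0"
proof -
  have bij: "bij_betw prt {..<2 * k} {..<2 * k}"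
    by (rule bij_betw_byWitness[of _ prt]) (auto simp: partner_partner partner_less)
  have "(\<Sum>j<2 * k. g (rect_shift j) * f (rgt j - lft j))
      = (\<Sum>j<2 * k. g (rect_shift (prt j)) * f (rgt (prt j) - lft (prt j)))"
    by (rule sum.reindex_bij_betw[OF bij, symmetric])
  also have "\<dots> = (\<Sum>j<2 * k. - (g (rect_shift j) * f (rgt j - lft j)))"
    using rect_shift_partner rect_width_partner additive.minus[OF assms] by (intro sum.cong) auto
  also have "\<dots> = - (\<Sum>j<2 * k. g (rect_shift j) * f (rgt j - lft j))"
    by (rule sum_negf)
  finally show ?thesis
    by simp
qed

lemma passage_orbit:
  assumes q: "(P, r) \<in> passages j" and x: "x \<in> {fst P<..<snd P}"
  shows "x \<in> {0<..<1} - cuts" "r < return_time x" "orbit_passes x r"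
    and "first_obstacle (orbit x r) = j" "fst (orbit x r) = x + piece_offset P r"
    and "lft j < fst (orbit x r)" "fst (orbit x r) < rgt j"
proof -
  have P: "P \<in> pieces" "r < piece_time P" "piece_rect P r = j"
    using q unfolding passages_def by auto
  show x': "x \<in> {0<..<1} - cuts"
    using piece_subset[OF P(1)] x by auto
  show r: "r < return_time x"
    using piece_itinerary(1)[OF P(1) x] P(2) by simp
  have pass: "pass (orbit x r) (orbit x (Suc r))"
    using regular_start_orbit(3)[OF x' r] .
  show "orbit_passes x r"
    using regular_start_orbit(1)[OF x'] r orbit_passes_mono unfolding returns_at_def by auto
  show fo: "first_obstacle (orbit x r) = j"
    using piece_itinerary(2)[OF P(1) x P(2)] P(3) by simp
  show "fst (orbit x r) = x + piece_offset P r"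
    using regular_start_orbit(4)[OF x', of r] r piece_itinerary(3)[OF P(1) x, of r] P(2) by simp
  show "lft j < fst (orbit x r)" "fst (orbit x r) < rgt j"
    using pass fo unfolding pass_iff by auto
qed

definition passage_lo :: "(real \<times> real) \<times> nat \<Rightarrow> real" where
  "passage_lo q = fst (fst q) + piece_offset (fst q) (snd q)"

definition passage_hi :: "(real \<times> real) \<times> nat \<Rightarrow> real" where
  "passage_hi q = snd (fst q) + piece_offset (fst q) (snd q)"

lemma passage_interval_orbit:
  assumes "(P, r) \<in> passages j" "z \<in> {passage_lo (P, r)<..<passage_hi (P, r)}"
  shows "z - piece_offset P r \<in> {fst P<..<snd P}" "fst (orbit (z - piece_offset P r) r) = z"
proof -
  show x: "z - piece_offset P r \<in> {fst P<..<snd P}"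
    using assms(2) unfolding passage_lo_def passage_hi_def by auto
  show "fst (orbit (z - piece_offset P r) r) = z"
    using passage_orbit(5)[OF assms(1) x] by simp
qed

lemma passage_in_rect:
  assumes q: "q \<in> passages j"
  shows "lft j \<le> passage_lo q \<and> passage_lo q < passage_hi q \<and> passage_hi q \<le> rgt j"
proof -
  obtain P r where qq: "q = (P, r)"
    by (cases q)
  have "passage_lo q < passage_hi q"
    using gapsD(3)[of P cuts] q qq unfolding passages_def passage_lo_def passage_hi_def by auto
  moreover have "{passage_lo q<..<passage_hi q} \<subseteq> {lft j<..<rgt j}"
  proof
    fix z
    assume "z \<in> {passage_lo q<..<passage_hi q}"
    then have "z - piece_offset P r \<in> {fst P<..<snd P}" "fst (orbit (z - piece_offset P r) r) = z"
      using passage_interval_orbit[OF q[unfolded qq]] qq by auto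
    then show "z \<in> {lft j<..<rgt j}"
      using passage_orbit(6,7)[OF q[unfolded qq]] by force
  qed
  ultimately show ?thesis
    using greaterThanLessThan_subseteq_greaterThanLessThan by blast
qed

lemma passages_disjoint:
  assumes q: "q \<in> passages j" and q': "q' \<in> passages j" and "q \<noteq> q'"
  shows "{passage_lo q<..<passage_hi q} \<inter> {passage_lo q'<..<passage_hi q'} = {}"
proof (rule ccontr)
  obtain P r P' r' where qq: "q = (P, r)" "q' = (P', r')"
    by (cases q, cases q')
  assume "{passage_lo q<..<passage_hi q} \<inter> {passage_lo q'<..<passage_hi q'} \<noteq> {}"
  then obtain z where z: "z \<in> {passage_lo q<..<passage_hi q}" "z \<in> {passage_lo q'<..<passage_hi q'}"
    by blast
  define x where "x = z - piece_offset P r"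
  define x' where "x' = z - piece_offset P' r'"
  note qP = q[unfolded qq] and qP' = q'[unfolded qq]
  have x: "x \<in> {fst P<..<snd P}" "fst (orbit x r) = z"
    using passage_interval_orbit[OF qP] z(1) qq unfolding x_def by auto
  have x': "x' \<in> {fst P'<..<snd P'}" "fst (orbit x' r') = z"
    using passage_interval_orbit[OF qP'] z(2) qq unfolding x'_def by auto
  have pass: "pass (orbit x r) (orbit x (Suc r))" "pass (orbit x' r') (orbit x' (Suc r'))"
    using regular_start_orbit(3) passage_orbit(1,2) qP qP' x(1) x'(1) by blast+
  have "snd (orbit x r) = snd (orbit x' r')"
    using same_first_obstacle_same_height[of "orbit x r" "orbit x' r'"] pass x(2) x'(2)
      passage_orbit(4)[OF qP x(1)] passage_orbit(4)[OF qP' x'(1)] pass_start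
    unfolding pass_iff by metis
  then have "orbit x r = orbit x' r'"
    using x(2) x'(2) by (simp add: prod_eq_iff)
  then have "x = x'" "r = r'"
    using orbit_inj[OF passage_orbit(3)[OF qP x(1)] passage_orbit(3)[OF qP' x'(1)]] by auto
  moreover have "P = P'"
    using gaps_disjoint[of P cuts P' x] x(1) x'(1) qP qP' \<open>x = x'\<close> unfolding passages_def by auto
  ultimately show False
    using assms(3) qq by simp
qed

lemma regular_orbit_point_in_passage:
  assumes x: "x \<in> {0<..<1} - cuts" and r: "r < return_time x" and j: "first_obstacle (orbit x r) = j"
  shows "fst (orbit x r) \<in> (\<Union>q\<in>passages j. {passage_lo q<..<passage_hi q})"
proof -
  obtain P where P: "P \<in> pieces" "x \<in> {fst P<..<snd P}"
    using pieces_cover[OF x] by blast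
  have n: "return_time x = piece_time P"
    using piece_itinerary(1)[OF P] .
  have "(P, r) \<in> passages j"
    using P r n j piece_itinerary(2)[OF P, of r] unfolding passages_def by auto
  moreover have "fst (orbit x r) = x + piece_offset P r"
    using regular_start_orbit(4)[OF x, of r] r piece_itinerary(3)[OF P, of r] n by simp
  ultimately show ?thesis
    using P(2) unfolding passage_lo_def passage_hi_def by force
qed

definition cut_orbit_points :: "real set" where
  "cut_orbit_points = (\<Union>x\<in>cuts. range (\<lambda>r. fst (orbit x r)))"

definition missed_values :: "real set" where
  "missed_values = {0<..<1} - T ` ({0<..<1} - cuts)"

definition missed_preimages :: "real set" where
  "missed_preimages = fst ` {p. \<exists>t. pass\<^sup>*\<^sup>* p t \<and> exits t \<and> fst t \<in> missed_values}"

lemma finite_missed_values: "finite missed_values"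
proof -
  have "missed_values \<subseteq> T ` cuts"
  proof
    fix w
    assume w: "w \<in> missed_values"
    then obtain x where x: "0 \<le> x" "x < 1" "T x = w"
      using iet_map_surj[OF iet, of w] unfolding missed_values_def by auto
    have "x \<in> cuts"
      using w x xpt_in_cuts[of 0] unfolding missed_values_def by (cases "x = 0") auto
    with x(3) show "w \<in> T ` cuts"
      by blast
  qed
  then show ?thesis
    using finite_cuts finite_subset by blast
qed

lemma countable_exceptional: "countable (cut_orbit_points \<union> missed_preimages)"
proof -
  have "countable cut_orbit_points"
    unfolding cut_orbit_points_def using finite_cuts by (intro countable_UN) (auto intro: countable_finite)
  moreover have fin: "finite {t. exits t \<and> fst t \<in> missed_values}"
  proof (rule finite_imageD)
    show "finite (fst ` {t. exits t \<and> fst t \<in> missed_values})"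
      using finite_missed_values by (rule finite_subset[rotated]) auto
    show "inj_on fst {t. exits t \<and> fst t \<in> missed_values}"
      using exits_unique by (intro inj_onI) auto
  qed
  have "countable {p. \<exists>t. pass\<^sup>*\<^sup>* p t \<and> exits t \<and> fst t \<in> missed_values}"
  proof (rule countable_subset)
    show "{p. \<exists>t. pass\<^sup>*\<^sup>* p t \<and> exits t \<and> fst t \<in> missed_values}
      \<subseteq> (\<Union>t\<in>{t. exits t \<and> fst t \<in> missed_values}. {p. pass\<^sup>*\<^sup>* p t})"
      by blast
    show "countable (\<Union>t\<in>{t. exits t \<and> fst t \<in> missed_values}. {p. pass\<^sup>*\<^sup>* p t})"
      using fin by (intro countable_UN countable_finite countable_pass_predecessors)
  qed
  ultimately show ?thesis
    unfolding missed_preimages_def by simp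
qed

lemma start_on_regular_orbit:
  assumes p: "start p" and z: "fst p \<notin> cut_orbit_points \<union> missed_preimages"
  obtains x r where "x \<in> {0<..<1} - cuts" "orbit_passes x r" "orbit x r = p"
  using fills p
proof (cases rule: start_connected_to_gamma)
  case (1 x)
  then obtain r where r: "orbit_passes x r" "orbit x r = p"
    using rtranclp_pass_from_gamma_orbit by blast
  have "x \<notin> cuts"
    using z r(2) unfolding cut_orbit_points_def by blast
  then show ?thesis
    using that 1 r by auto
next
  case (2 t)
  have "fst t \<notin> missed_values"
    using z 2 unfolding missed_preimages_def by blast
  moreover have "0 < fst t \<and> fst t < 1"
    using start_in_unit[OF exits_start[OF 2(2)]] .
  ultimately obtain x where x: "x \<in> {0<..<1} - cuts" "T x = fst t"
    unfolding missed_values_def by auto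
  then have "orbit x (return_time x) = t"
    using exits_unique[OF _ 2(2)] regular_start_orbit(1)[OF x(1)] returns_to_T(2) not_in_cuts
    unfolding returns_at_def by metis
  moreover have passes: "orbit_passes x (return_time x)"
    using regular_start_orbit(1)[OF x(1)] unfolding returns_at_def by simp
  ultimately obtain r where "r \<le> return_time x" "orbit x r = p"
    using orbit_through_pass_predecessor[OF 2(1)] by blast
  then show ?thesis
    using that x(1) orbit_passes_mono[OF passes] by blast
qed

lemma rect_point_on_regular_orbit:
  assumes j: "j < 2 * k" and z: "z \<in> {lft j<..<rgt j}" "z \<notin> cut_orbit_points \<union> missed_preimages"
  obtains x r where "x \<in> {0<..<1} - cuts" "r < return_time x"
    "first_obstacle (orbit x r) = j" "fst (orbit x r) = z"
proof -
  obtain h where h: "pass (z, h) (z + rect_shift j, y (prt j) + \<epsilon>)" "first_obstacle (z, h) = j"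
    using pass_from_below[OF j] z(1) by auto
  obtain x r where x: "x \<in> {0<..<1} - cuts" "orbit_passes x r" "orbit x r = (z, h)"
    using start_on_regular_orbit[OF pass_start[OF h(1)]] z(2) by auto
  then have "orbit_passes x (Suc r)"
    using orbit_passes_SucI h(1) by simp
  then have "r < return_time x"
    using returns_at_bound regular_start_orbit(1)[OF x(1)] by fastforce
  then show ?thesis
    using that x h(2) by simp
qed

lemma additive_sum_passages:
  assumes "additive f" "j < 2 * k"
  shows "(\<Sum>q\<in>passages j. f (snd (fst q) - fst (fst q))) = f (rgt j - lft j)"
proof -
  have "{lft j<..<rgt j} - (\<Union>q\<in>passages j. {passage_lo q<..<passage_hi q})
      \<subseteq> cut_orbit_points \<union> missed_preimages"
  proof (rule subsetI, rule ccontr)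
    fix z
    assume z: "z \<in> {lft j<..<rgt j} - (\<Union>q\<in>passages j. {passage_lo q<..<passage_hi q})"
      "z \<notin> cut_orbit_points \<union> missed_preimages"
    then obtain x r where "x \<in> {0<..<1} - cuts" "r < return_time x"
      "first_obstacle (orbit x r) = j" "fst (orbit x r) = z"
      using rect_point_on_regular_orbit[OF assms(2)] by blast
    then show False
      using regular_orbit_point_in_passage z(1) by blast
  qed
  then have "(\<Sum>q\<in>passages j. f (passage_hi q - passage_lo q)) = f (rgt j - lft j)"
    using rect_bounds(2)[OF assms(2)] passage_in_rect passages_disjoint countable_exceptional
    by (intro additive_sum_interval_tiling[OF finite_passages assms(1)])
      (auto intro: countable_subset)
  moreover have "passage_hi q - passage_lo q = snd (fst q) - fst (fst q)" for q
    unfolding passage_lo_def passage_hi_def by simp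
  ultimately show ?thesis
    by simp
qed

theorem additive_skew_sum_vanishes:
  fixes f g :: "real \<Rightarrow> real"
  assumes "additive f" "additive g"
  shows "(\<Sum>i\<in>{1..m}. f (lam i) * g (\<Sum>j\<in>{1..m}. skew_coeff m \<rho> i j * lam j)) = 0"
proof -
  have "(\<Sum>i\<in>{1..m}. f (lam i) * g (\<Sum>j\<in>{1..m}. skew_coeff m \<rho> i j * lam j))
      = (\<Sum>j<2 * k. g (rect_shift j) * (\<Sum>q\<in>passages j. f (snd (fst q) - fst (fst q))))"
    using sum_lam_eq_sum_pieces[OF assms(1)] sum_pieces_eq_sum_passages[OF assms(2)] by simp
  also have "\<dots> = (\<Sum>j<2 * k. g (rect_shift j) * f (rgt j - lft j))"
    using additive_sum_passages[OF assms(1)] by simp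
  also have "\<dots> = 0"
    using sum_partner_pairs_vanishes[OF assms(2)] .
  finally show ?thesis .
qed

end

theorem proposition11:
  fixes k :: nat and a b c d y :: "nat \<Rightarrow> real" and \<epsilon> :: real
    and m :: nat and \<rho> :: "nat \<Rightarrow> nat" and lam :: "nat \<Rightarrow> real"
  assumes "op_system k a b c d"
    and "admissible k y"
    and "eps_ok k y \<epsilon>"
    and "iet_data m \<rho> lam"
    and "\<exists>F. finite F \<and> (\<forall>x\<in>{0<..<1} - F. first_return k a b c d y \<epsilon> x (iet_map m \<rho> lam x))"
    and "fills k a b c d y \<epsilon>"
  shows "rich m \<rho> (restriction_space m lam)"
proof -
  obtain F where "finite F" "\<forall>x\<in>{0<..<1} - F. first_return k a b c d y \<epsilon> x (iet_map m \<rho> lam x)"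
    using assms(5) by blast
  then interpret filling_suspension k a b c d y \<epsilon> m \<rho> lam F
    using assms by unfold_locales
  show ?thesis
    by (rule rich_restriction_spaceI) (rule additive_skew_sum_vanishes)
qed

end
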